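(* Let $N\geq2$, let $\mathcal{H}_{X_1},\dots,\mathcal{H}_{X_N}$ be finite-dimensional Hilbert spaces and let $\rho=|V\rangle\langle V|$ be a pure state on $\mathcal{H}_{X_1}\otimes\cdots\otimes\mathcal{H}_{X_N}$ such that $I(X_1:X_j)_\rho=0$ for all $j\neq1$. For each $i$, let $\lambda^i_1\geq\lambda^i_2\geq\cdots$ be the eigenvalues of $\rho_{X_i}$ in decreasing order and $|e^i_1\rangle,|e^i_2\rangle,\dots$ a corresponding orthonormal eigenbasis of $\mathcal{H}_{X_i}$. Write $|V\rangle=\sum_{x_1,\dots,x_N}V_{x_1\dots x_N}|e^1_{x_1}\rangle\otimes\cdots\otimes|e^N_{x_N}\rangle$, and set $\epsilon_i=1-\lambda^i_1$ and $\varepsilon=\sum_{i=1}^N\epsilon_i$. Then $$\sum_{x_1>1}|V_{x_1 1\dots1}|^2\geq\epsilon_1(1+\epsilon_1-\varepsilon).$$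
   Context: $\rho_{\mathcal X}$ denotes the reduced state (partial trace over the factors not in $\mathcal X$). Von Neumann entropy of a density operator $\sigma$ is $-\mathrm{Tr}[\sigma\log\sigma]$ (binary logarithm); $H(\mathcal X)_\rho$ is the entropy of $\rho_{\mathcal X}$, and $I(X_i:X_j)_\rho=H(X_i)_\rho+H(X_j)_\rho-H(X_iX_j)_\rho$. The sum runs over indices $x_1=2,\dots,\dim\mathcal{H}_{X_1}$, with all other indices equal to $1$. *)

theory Defs
  imports Complex_Main "HOL-Library.FuncSet"
begin

text \<open>There are N parties, indexed 0,...,N-1 (party 0 is X_1 of the paper).
 Party i has Hilbert space C^(d i) with computational basis indexed by {..<d i}.
 A joint basis index is a function x in PiE {..<N} (\<lambda>i. {..<d i}); a vector of the
 joint space is a function V from such indices to complex numbers.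
 Matrices on a finite index set K are functions K -> K -> complex.\<close>

definition configs :: "nat \<Rightarrow> (nat \<Rightarrow> nat) \<Rightarrow> (nat \<Rightarrow> nat) set" where
  "configs N d = PiE {..<N} (\<lambda>i. {..<d i})"

text \<open>Reduced state of the pure state |V><V| on the parties in S (partial trace over the rest);
 indexed by y, z in PiE S (\<lambda>i. {..<d i}).\<close>
definition reduced ::
  "nat \<Rightarrow> (nat \<Rightarrow> nat) \<Rightarrow> ((nat \<Rightarrow> nat) \<Rightarrow> complex) \<Rightarrow> nat set
    \<Rightarrow> (nat \<Rightarrow> nat) \<Rightarrow> (nat \<Rightarrow> nat) \<Rightarrow> complex" where
  "reduced N d V S y z =
     (\<Sum>x\<in>{x\<in>configs N d. restrict x S = y}.
        V x * cnj (V (\<lambda>i. if i \<in> S then z i else x i)))"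

definition red_index_set :: "(nat \<Rightarrow> nat) \<Rightarrow> nat set \<Rightarrow> (nat \<Rightarrow> nat) set" where
  "red_index_set d S = PiE S (\<lambda>i. {..<d i})"

definition reduced1 ::
  "nat \<Rightarrow> (nat \<Rightarrow> nat) \<Rightarrow> ((nat \<Rightarrow> nat) \<Rightarrow> complex) \<Rightarrow> nat \<Rightarrow> nat \<Rightarrow> nat \<Rightarrow> complex" where
  "reduced1 N d V i a b =
     reduced N d V {i} ((\<lambda>_. undefined)(i := a)) ((\<lambda>_. undefined)(i := b))"

definition orthonormal_eigenbasis ::
  "'k set \<Rightarrow> ('k \<Rightarrow> 'k \<Rightarrow> complex) \<Rightarrow> ('k \<Rightarrow> 'k \<Rightarrow> complex) \<Rightarrow> ('k \<Rightarrow> real) \<Rightarrow> bool" where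
  "orthonormal_eigenbasis K A u lam \<longleftrightarrow>
     (\<forall>k\<in>K. \<forall>l\<in>K. (\<Sum>m\<in>K. u k m * cnj (u l m)) = (if k = l then 1 else 0)) \<and>
     (\<forall>k\<in>K. \<forall>a\<in>K. (\<Sum>b\<in>K. A a b * u k b) = complex_of_real (lam k) * u k a)"

definition vn_entropy :: "'k set \<Rightarrow> ('k \<Rightarrow> 'k \<Rightarrow> complex) \<Rightarrow> real" where
  "vn_entropy K A = (SOME h. \<exists>u lam. orthonormal_eigenbasis K A u lam \<and>
      h = - (\<Sum>k\<in>K. if lam k = 0 then 0 else lam k * log 2 (lam k)))"

definition entropy_of ::
  "nat \<Rightarrow> (nat \<Rightarrow> nat) \<Rightarrow> ((nat \<Rightarrow> nat) \<Rightarrow> complex) \<Rightarrow> nat set \<Rightarrow> real" where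
  "entropy_of N d V S = vn_entropy (red_index_set d S) (reduced N d V S)"

definition mutual_info ::
  "nat \<Rightarrow> (nat \<Rightarrow> nat) \<Rightarrow> ((nat \<Rightarrow> nat) \<Rightarrow> complex) \<Rightarrow> nat \<Rightarrow> nat \<Rightarrow> real" where
  "mutual_info N d V i j =
     entropy_of N d V {i} + entropy_of N d V {j} - entropy_of N d V {i, j}"

definition coeff_in_basis ::
  "nat \<Rightarrow> (nat \<Rightarrow> nat) \<Rightarrow> ((nat \<Rightarrow> nat) \<Rightarrow> complex) \<Rightarrow> (nat \<Rightarrow> nat \<Rightarrow> nat \<Rightarrow> complex)
     \<Rightarrow> (nat \<Rightarrow> nat) \<Rightarrow> complex" where
  "coeff_in_basis N d V e y = (\<Sum>x\<in>configs N d. (\<Prod>i<N. cnj (e i (y i) (x i))) * V x)"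

end

theory Submission
  imports Defs "HOL-Analysis.Topology_Euclidean_Space" "HOL-Analysis.Function_Topology"
begin

text \<open>
  Measure every party in the eigenbasis of its reduced state. Outcome \<open>x\<close> has probability
  \<open>p x = |V_x|^2\<close>, and the marginal of \<open>p\<close> on party \<open>i\<close> is the spectrum of \<open>\<rho>_{X_i}\<close>, so
  \<open>H(p_i) = H(X_i)\<close>. The marginal \<open>p_{1j}\<close> is the diagonal of \<open>\<rho>_{X_1X_j}\<close> in a product
  basis, and dephasing does not decrease entropy, hence
  \<open>H(p_{1j}) \<ge> H(X_1X_j) = H(X_1) + H(X_j) = H(p_1) + H(p_j)\<close>.
  The equality case of subadditivity (Gibbs' inequality) makes \<open>x_1\<close> independent of each
  \<open>x_j\<close> under \<open>p\<close>. A union bound then gives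
  \<open>P(x_1 > 1, x_j = 1 for j > 1) \<ge> \<epsilon>_1 - \<Sum>_{j>1} P(x_1 > 1) P(x_j > 1) = \<epsilon>_1 (1 + \<epsilon>_1 - \<epsilon>)\<close>.
  Since the entropy of a reduced state is defined through an eigenbasis, the argument also needs
  the spectral theorem for Hermitian matrices, obtained by maximising the quadratic form on
  orthogonal complements.
\<close>

section \<open>Finite-dimensional inner product spaces\<close>

definition cinner :: "'k set \<Rightarrow> ('k \<Rightarrow> complex) \<Rightarrow> ('k \<Rightarrow> complex) \<Rightarrow> complex" where
  "cinner K v w = (\<Sum>m\<in>K. v m * cnj (w m))"

definition orthonormal_family :: "'k set \<Rightarrow> 'i set \<Rightarrow> ('i \<Rightarrow> 'k \<Rightarrow> complex) \<Rightarrow> bool" where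
  "orthonormal_family K I u \<longleftrightarrow>
     (\<forall>k\<in>I. \<forall>l\<in>I. cinner K (u k) (u l) = (if k = l then 1 else 0))"

definition mat_apply :: "'k set \<Rightarrow> ('k \<Rightarrow> 'k \<Rightarrow> complex) \<Rightarrow> ('k \<Rightarrow> complex) \<Rightarrow> 'k \<Rightarrow> complex" where
  "mat_apply K A v = (\<lambda>a. \<Sum>b\<in>K. A a b * v b)"

definition hermitian_on :: "'k set \<Rightarrow> ('k \<Rightarrow> 'k \<Rightarrow> complex) \<Rightarrow> bool" where
  "hermitian_on K A \<longleftrightarrow> (\<forall>a\<in>K. \<forall>b\<in>K. A a b = cnj (A b a))"

lemma cinner_cong:
  "(\<And>a. a \<in> K \<Longrightarrow> v a = v' a) \<Longrightarrow> (\<And>a. a \<in> K \<Longrightarrow> w a = w' a) \<Longrightarrow>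
    cinner K v w = cinner K v' w'"
  unfolding cinner_def by simp

lemma cinner_commute: "cinner K w v = cnj (cinner K v w)"
  unfolding cinner_def by (simp add: mult.commute)

lemma cinner_sum_left:
  "cinner K (\<lambda>m. \<Sum>k\<in>I. c k * u k m) w = (\<Sum>k\<in>I. c k * cinner K (u k) w)"
  unfolding cinner_def by (simp add: sum_distrib_left sum_distrib_right mult.assoc sum.swap[of _ K])

lemma cinner_sum_right:
  "cinner K w (\<lambda>m. \<Sum>k\<in>I. c k * u k m) = (\<Sum>k\<in>I. cnj (c k) * cinner K w (u k))"
  unfolding cinner_def
  by (simp add: sum_distrib_left sum_distrib_right mult.assoc mult.left_commute sum.swap[of _ K])

lemma cinner_add_scale_left: "cinner K (\<lambda>a. v a + c * v' a) w = cinner K v w + c * cinner K v' w"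
  unfolding cinner_def by (simp add: distrib_right sum.distrib sum_distrib_left mult.assoc)

lemma cinner_add_scale_real:
  "cinner K (\<lambda>a. f a + complex_of_real \<tau> * g a) (\<lambda>a. h a + complex_of_real \<tau> * k a) =
    cinner K f h + complex_of_real \<tau> * cinner K f k + complex_of_real \<tau> * cinner K g h
    + complex_of_real \<tau> * complex_of_real \<tau> * cinner K g k"
  unfolding cinner_def
  by (simp add: sum.distrib sum_distrib_left distrib_left distrib_right mult_ac)

lemma cinner_diff_left: "cinner K (\<lambda>m. v m - v' m) w = cinner K v w - cinner K v' w"
  unfolding cinner_def by (simp add: sum_subtractf left_diff_distrib)

lemma cinner_diff_right: "cinner K w (\<lambda>m. v m - v' m) = cinner K w v - cinner K w v'"
  unfolding cinner_def by (simp add: sum_subtractf right_diff_distrib)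

lemma cinner_scale_left: "cinner K (\<lambda>a. c * v a) w = c * cinner K v w"
  unfolding cinner_def by (simp add: sum_distrib_left mult_ac)

lemma cinner_scale_right: "cinner K w (\<lambda>a. c * v a) = cnj c * cinner K w v"
  unfolding cinner_def by (simp add: sum_distrib_left mult_ac)

lemma cinner_delta_left:
  "finite K \<Longrightarrow> a \<in> K \<Longrightarrow> cinner K (\<lambda>m. if m = a then 1 else 0) w = cnj (w a)"
  unfolding cinner_def by (simp add: if_distrib[of "\<lambda>x. x * _"] cong: if_cong)

lemma cinner_self: "cinner K v v = complex_of_real (\<Sum>m\<in>K. (cmod (v m))\<^sup>2)"
  unfolding cinner_def of_real_sum by (simp only: complex_norm_square)

lemma cinner_self_Re: "Re (cinner K v v) = (\<Sum>m\<in>K. (cmod (v m))\<^sup>2)"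
  unfolding cinner_self by simp

lemma cinner_self_real: "cinner K v v = complex_of_real (Re (cinner K v v))"
  unfolding cinner_self by simp

lemma cinner_self_eq_0: "finite K \<Longrightarrow> cinner K v v = 0 \<Longrightarrow> m \<in> K \<Longrightarrow> v m = 0"
  unfolding cinner_self of_real_eq_0_iff by (simp add: sum_nonneg_eq_0_iff)

lemma cinner_self_eq_scale:
  "cinner K (\<lambda>a. of_real c * v a) (\<lambda>a. of_real c * v a) = of_real (c * c) * cinner K v v"
  unfolding cinner_scale_left cinner_scale_right by simp

lemma continuous_on_cinner [continuous_intros]:
  fixes f g :: "'a::topological_space \<Rightarrow> 'k \<Rightarrow> complex"
  assumes "\<And>a. continuous_on S (\<lambda>v. f v a)" "\<And>a. continuous_on S (\<lambda>v. g v a)"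
  shows "continuous_on S (\<lambda>v. cinner K (f v) (g v))"
  unfolding cinner_def by (intro continuous_intros assms)

lemma continuous_on_mat_apply [continuous_intros]:
  fixes f :: "'a::topological_space \<Rightarrow> 'k \<Rightarrow> complex"
  assumes "\<And>a. continuous_on S (\<lambda>v. f v a)"
  shows "continuous_on S (\<lambda>v. mat_apply K A (f v) a)"
  unfolding mat_apply_def by (intro continuous_intros assms)

lemma mat_apply_add_scale:
  "mat_apply K A (\<lambda>b. v b + c * w b) = (\<lambda>a. mat_apply K A v a + c * mat_apply K A w a)"
  unfolding mat_apply_def by (simp add: sum.distrib sum_distrib_left algebra_simps)

lemma mat_apply_scale: "mat_apply K A (\<lambda>b. c * v b) = (\<lambda>a. c * mat_apply K A v a)"
  unfolding mat_apply_def by (simp add: sum_distrib_left mult_ac)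

lemma hermitian_cinner:
  assumes "hermitian_on K A"
  shows "cinner K (mat_apply K A v) w = cinner K v (mat_apply K A w)"
proof -
  have "cinner K (mat_apply K A v) w = (\<Sum>a\<in>K. \<Sum>b\<in>K. A a b * v b * cnj (w a))"
    unfolding cinner_def mat_apply_def by (simp add: sum_distrib_right)
  also have "\<dots> = (\<Sum>b\<in>K. \<Sum>a\<in>K. A a b * v b * cnj (w a))"
    by (rule sum.swap)
  also have "\<dots> = (\<Sum>b\<in>K. \<Sum>a\<in>K. v b * (cnj (A b a) * cnj (w a)))"
  proof (intro sum.cong refl)
    fix a b assume "a \<in> K" "b \<in> K"
    then have "A b a = cnj (A a b)" using assms unfolding hermitian_on_def by blast
    then show "A b a * v a * cnj (w b) = v a * (cnj (A a b) * cnj (w b))" by simp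
  qed
  also have "\<dots> = cinner K v (mat_apply K A w)"
    unfolding cinner_def mat_apply_def by (simp add: sum_distrib_left)
  finally show ?thesis .
qed

lemma orthonormal_family_sum_left:
  assumes "orthonormal_family K I u" "finite I" "l \<in> I"
  shows "(\<Sum>k\<in>I. c k * cinner K (u k) (u l)) = c l"
proof -
  have "(\<Sum>k\<in>I. c k * cinner K (u k) (u l)) = (\<Sum>k\<in>I. if k = l then c k else 0)"
    using assms(1,3) by (intro sum.cong) (auto simp: orthonormal_family_def)
  then show ?thesis using assms(2,3) by simp
qed

lemma orthonormal_family_sum_cmod:
  assumes "orthonormal_family K I u" "finite I"
  shows "(\<Sum>a\<in>K. \<Sum>k\<in>I. (cmod (u k a))\<^sup>2) = real (card I)"
proof -
  have norm1: "(\<Sum>a\<in>K. (cmod (u k a))\<^sup>2) = 1" if "k \<in> I" for k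
    using assms(1) that cinner_self_Re[of K "u k"] by (simp add: orthonormal_family_def)
  have "(\<Sum>a\<in>K. \<Sum>k\<in>I. (cmod (u k a))\<^sup>2) = (\<Sum>k\<in>I. \<Sum>a\<in>K. (cmod (u k a))\<^sup>2)"
    by (rule sum.swap)
  also have "\<dots> = (\<Sum>k\<in>I. 1)"
    by (rule sum.cong[OF refl norm1])
  finally show ?thesis by simp
qed

lemma orthonormal_family_residual:
  assumes K: "finite K" and I: "finite I" and u: "orthonormal_family K I u" and a: "a \<in> K"
  defines "r \<equiv> \<lambda>b. (if b = a then 1 else 0) - (\<Sum>k\<in>I. cnj (u k a) * u k b)"
  shows "cinner K r r = 1 - complex_of_real (\<Sum>k\<in>I. (cmod (u k a))\<^sup>2)"
    and "\<forall>l\<in>I. cinner K r (u l) = 0"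
proof -
  define \<delta> where "\<delta> = (\<lambda>b. if b = a then (1::complex) else 0)"
  define P where "P = (\<lambda>b. \<Sum>k\<in>I. cnj (u k a) * u k b)"
  have r: "r = (\<lambda>b. \<delta> b - P b)" unfolding r_def \<delta>_def P_def by simp
  have \<delta>_u: "cinner K \<delta> (u l) = cnj (u l a)" for l
    unfolding \<delta>_def using K a by (rule cinner_delta_left)
  have P_u: "cinner K P (u l) = cnj (u l a)" if "l \<in> I" for l
    unfolding P_def cinner_sum_left using orthonormal_family_sum_left[OF u I that] .
  have s: "(\<Sum>k\<in>I. cnj (u k a) * u k a) = complex_of_real (\<Sum>k\<in>I. (cmod (u k a))\<^sup>2)"
    unfolding of_real_sum complex_norm_square by (simp add: mult.commute)
  have \<delta>P: "cinner K \<delta> P = (\<Sum>k\<in>I. cnj (u k a) * u k a)"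
    unfolding P_def cinner_sum_right \<delta>_u by (simp add: mult.commute)
  have P\<delta>: "cinner K P \<delta> = (\<Sum>k\<in>I. cnj (u k a) * u k a)"
    unfolding cinner_commute[of K P] \<delta>P by (simp add: cnj_sum mult.commute)
  have P_w: "cinner K P w = (\<Sum>k\<in>I. cnj (u k a) * cinner K (u k) w)" for w
    unfolding P_def by (rule cinner_sum_left)
  have "cinner K (u k) P = u k a" if "k \<in> I" for k
    unfolding cinner_commute[of K "u k" P] P_u[OF that] by (rule complex_cnj_cnj)
  then have PP: "cinner K P P = (\<Sum>k\<in>I. cnj (u k a) * u k a)"
    unfolding P_w[of P] by simp
  have \<delta>\<delta>: "cinner K \<delta> \<delta> = 1"
    unfolding \<delta>_def using K a by (simp add: cinner_delta_left)
  show "cinner K r r = 1 - complex_of_real (\<Sum>k\<in>I. (cmod (u k a))\<^sup>2)"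
    unfolding r cinner_diff_left cinner_diff_right \<delta>P P\<delta> PP \<delta>\<delta> s by simp
  show "\<forall>l\<in>I. cinner K r (u l) = 0"
    unfolding r cinner_diff_left by (simp add: \<delta>_u P_u)
qed

lemma orthonormal_family_bessel:
  assumes "finite K" "finite I" "orthonormal_family K I u" "a \<in> K"
  shows "(\<Sum>k\<in>I. (cmod (u k a))\<^sup>2) \<le> 1"
proof -
  define r where "r = (\<lambda>b. (if b = a then 1 else 0) - (\<Sum>k\<in>I. cnj (u k a) * u k b))"
  have "cinner K r r = 1 - complex_of_real (\<Sum>k\<in>I. (cmod (u k a))\<^sup>2)"
    unfolding r_def by (rule orthonormal_family_residual(1)[OF assms])
  then have "(\<Sum>m\<in>K. (cmod (r m))\<^sup>2) = 1 - (\<Sum>k\<in>I. (cmod (u k a))\<^sup>2)"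
    unfolding cinner_self_Re[symmetric] by simp
  moreover have "(\<Sum>m\<in>K. (cmod (r m))\<^sup>2) \<ge> 0" by (simp add: sum_nonneg)
  ultimately show ?thesis by linarith
qed

lemma orthonormal_family_complete:
  assumes K: "finite K" and I: "finite I" and u: "orthonormal_family K I u"
    and card: "card I = card K" and a: "a \<in> K" and b: "b \<in> K"
  shows "(\<Sum>k\<in>I. cnj (u k a) * u k b) = (if b = a then 1 else 0)"
proof -
  \<comment> \<open>Each \<open>s a\<close> is at most 1 by Bessel and they add up to \<open>card K\<close>, so the residual of
    the unit vector at \<open>a\<close> vanishes.\<close>
  define s where "s a = (\<Sum>k\<in>I. (cmod (u k a))\<^sup>2)" for a
  define r where "r = (\<lambda>b. (if b = a then 1 else 0) - (\<Sum>k\<in>I. cnj (u k a) * u k b))"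
  have "(\<Sum>a\<in>K. 1 - s a) = 0"
    using orthonormal_family_sum_cmod[OF u I] card unfolding s_def by (simp add: sum_subtractf)
  moreover have "\<forall>a\<in>K. 0 \<le> 1 - s a"
    using orthonormal_family_bessel[OF K I u] unfolding s_def by simp
  ultimately have "s a = 1"
    using K a sum_nonneg_eq_0_iff[of K "\<lambda>a. 1 - s a"] by simp
  moreover have "cinner K r r = 1 - complex_of_real (s a)"
    unfolding r_def s_def by (rule orthonormal_family_residual(1)[OF K I u a])
  ultimately have "cinner K r r = 0" by simp
  then have "r b = 0" by (rule cinner_self_eq_0[OF K _ b])
  then show ?thesis unfolding r_def right_minus_eq by (rule sym)
qed

lemma orthonormal_family_extend:
  assumes K: "finite K" and I: "finite I" and u: "orthonormal_family K I u"
    and card: "card I < card K"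
  obtains v where "cinner K v v = 1" and "\<forall>l\<in>I. cinner K v (u l) = 0"
proof -
  define s where "s a = (\<Sum>k\<in>I. (cmod (u k a))\<^sup>2)" for a
  have "\<exists>a\<in>K. s a < 1"
  proof (rule ccontr)
    assume "\<not> ?thesis"
    then have "(\<Sum>a\<in>K. 1) \<le> (\<Sum>a\<in>K. s a)" by (intro sum_mono) auto
    then show False using orthonormal_family_sum_cmod[OF u I] card unfolding s_def by simp
  qed
  then obtain a where a: "a \<in> K" and sa: "s a < 1" by blast
  define r where "r = (\<lambda>b. (if b = a then 1 else 0) - (\<Sum>k\<in>I. cnj (u k a) * u k b))"
  define c where "c = 1 / sqrt (1 - s a)"
  have rr: "cinner K r r = complex_of_real (1 - s a)"
    using orthonormal_family_residual(1)[OF K I u a] unfolding r_def s_def by simp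
  have "c * c * (1 - s a) = 1"
    using sa unfolding c_def by (simp add: power2_eq_square[symmetric] power_divide)
  moreover have "cinner K (\<lambda>b. of_real c * r b) (\<lambda>b. of_real c * r b) = of_real (c * c * (1 - s a))"
    unfolding cinner_self_eq_scale rr by simp
  ultimately have "cinner K (\<lambda>b. of_real c * r b) (\<lambda>b. of_real c * r b) = 1"
    by simp
  moreover have "\<forall>l\<in>I. cinner K (\<lambda>b. of_real c * r b) (u l) = 0"
    using orthonormal_family_residual(2)[OF K I u a] unfolding r_def cinner_scale_left by simp
  ultimately show ?thesis by (rule that)
qed

lemma orthonormal_basis_expansion:
  assumes K: "finite K" and I: "finite I" and u: "orthonormal_family K I u"
    and card: "card I = card K" and b: "b \<in> K"
  shows "v b = (\<Sum>k\<in>I. cinner K v (u k) * u k b)"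
proof -
  have "(\<Sum>k\<in>I. cinner K v (u k) * u k b) = (\<Sum>k\<in>I. \<Sum>a\<in>K. v a * (cnj (u k a) * u k b))"
    unfolding cinner_def by (simp add: sum_distrib_right mult.assoc)
  also have "\<dots> = (\<Sum>a\<in>K. \<Sum>k\<in>I. v a * (cnj (u k a) * u k b))"
    by (rule sum.swap)
  also have "\<dots> = (\<Sum>a\<in>K. v a * (\<Sum>k\<in>I. cnj (u k a) * u k b))"
    by (simp add: sum_distrib_left)
  also have "\<dots> = (\<Sum>a\<in>K. v a * (if b = a then 1 else 0))"
    using orthonormal_family_complete[OF K I u card _ b] by simp
  also have "\<dots> = v b"
    using K b by (simp add: if_distrib[of "\<lambda>x. v _ * x"] cong: if_cong)
  finally show ?thesis by simp
qed

lemma orthonormal_basis_parseval: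
  assumes "finite K" "finite I" "orthonormal_family K I u" "card I = card K"
  shows "(\<Sum>k\<in>I. (cmod (cinner K v (u k)))\<^sup>2) = Re (cinner K v v)"
proof -
  have "cinner K v v = cinner K (\<lambda>b. \<Sum>k\<in>I. cinner K v (u k) * u k b) v"
    using orthonormal_basis_expansion[OF assms] by (intro cinner_cong) auto
  also have "\<dots> = (\<Sum>k\<in>I. cinner K v (u k) * cnj (cinner K v (u k)))"
    unfolding cinner_sum_left by (simp add: cinner_commute[of K "u _"])
  also have "\<dots> = complex_of_real (\<Sum>k\<in>I. (cmod (cinner K v (u k)))\<^sup>2)"
    unfolding of_real_sum by (simp only: complex_norm_square)
  finally show ?thesis by simp
qed

section \<open>Spectral theorem for Hermitian matrices\<close>

definition eigenvectors_on ::
  "'k set \<Rightarrow> ('k \<Rightarrow> 'k \<Rightarrow> complex) \<Rightarrow> 'i set \<Rightarrow> ('i \<Rightarrow> 'k \<Rightarrow> complex) \<Rightarrow> ('i \<Rightarrow> real) \<Rightarrow> bool"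
  where "eigenvectors_on K A I u lam \<longleftrightarrow>
    (\<forall>k\<in>I. \<forall>a\<in>K. mat_apply K A (u k) a = complex_of_real (lam k) * u k a)"

lemma orthonormal_eigenbasis_iff:
  "orthonormal_eigenbasis K A u lam \<longleftrightarrow> orthonormal_family K K u \<and> eigenvectors_on K A K u lam"
  unfolding orthonormal_eigenbasis_def orthonormal_family_def eigenvectors_on_def
    cinner_def mat_apply_def by auto

lemma eigenvectors_on_cinner:
  assumes "eigenvectors_on K A I u lam" "orthonormal_family K I u" "k \<in> I"
  shows "cinner K (mat_apply K A (u k)) (u k) = complex_of_real (lam k)"
proof -
  have "cinner K (mat_apply K A (u k)) (u k) = cinner K (\<lambda>a. complex_of_real (lam k) * u k a) (u k)"
    using assms(1,3) unfolding eigenvectors_on_def by (intro cinner_cong) auto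
  then show ?thesis
    using assms(2,3) unfolding cinner_scale_left orthonormal_family_def by simp
qed

lemma quadratic_nonneg_imp_linear_coeff_zero:
  fixes r c :: real
  assumes "0 \<le> c" and "\<And>\<tau>. 0 \<le> 2 * \<tau> * r + \<tau> * \<tau> * c"
  shows "r = 0"
proof (rule ccontr)
  assume "r \<noteq> 0"
  define \<tau> where "\<tau> = - r / (c + 1)"
  have "0 \<le> (2 * \<tau> * r + \<tau> * \<tau> * c) * ((c + 1) * (c + 1))"
    using assms by simp
  also have "\<dots> = 2 * (\<tau> * (c + 1)) * r * (c + 1) + (\<tau> * (c + 1)) * (\<tau> * (c + 1)) * c"
    by (simp add: algebra_simps)
  also have "\<tau> * (c + 1) = - r"
    using assms(1) unfolding \<tau>_def by simp
  also have "2 * - r * r * (c + 1) + - r * - r * c = - (r * r) * (c + 2)"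
    by (simp add: algebra_simps)
  also have "\<dots> < 0"
    using \<open>r \<noteq> 0\<close> assms(1) by (simp add: mult_pos_pos not_square_less_zero less_le)
  finally show False by simp
qed

lemma hermitian_form_zero_imp_kernel:
  assumes K: "finite K" and B: "hermitian_on K B"
    and nonneg: "\<And>x. P x \<Longrightarrow> 0 \<le> Re (cinner K (mat_apply K B x) x)"
    and subspace: "\<And>x y \<tau>. P x \<Longrightarrow> P y \<Longrightarrow> P (\<lambda>a. x a + complex_of_real \<tau> * y a)"
    and v: "P v" "P (mat_apply K B v)" and zero: "Re (cinner K (mat_apply K B v) v) = 0"
    and a: "a \<in> K"
  shows "mat_apply K B v a = 0"
proof -
  define w where "w = mat_apply K B v"
  have Bw_v: "cinner K (mat_apply K B w) v = cinner K w w"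
    using hermitian_cinner[OF B, of w v] by (simp only: w_def[symmetric])
  have "0 \<le> 2 * \<tau> * Re (cinner K w w) + \<tau> * \<tau> * Re (cinner K (mat_apply K B w) w)" for \<tau>
  proof -
    define x where "x = (\<lambda>a. v a + complex_of_real \<tau> * w a)"
    have "cinner K (mat_apply K B x) x = cinner K w v + complex_of_real \<tau> * cinner K w w
        + complex_of_real \<tau> * cinner K w w
        + complex_of_real \<tau> * complex_of_real \<tau> * cinner K (mat_apply K B w) w"
      unfolding x_def mat_apply_add_scale w_def[symmetric] cinner_add_scale_real Bw_v ..
    moreover have "0 \<le> Re (cinner K (mat_apply K B x) x)"
      unfolding x_def using nonneg subspace v unfolding w_def by blast
    moreover have "Re (cinner K w v) = 0" using zero unfolding w_def .
    ultimately show ?thesis by simp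
  qed
  then have "Re (cinner K w w) = 0"
    by (intro quadratic_nonneg_imp_linear_coeff_zero[OF nonneg[OF v(2)[folded w_def]]])
  then have "cinner K w w = 0" using cinner_self_real[of K w] by simp
  from cinner_self_eq_0[OF K this a] show ?thesis unfolding w_def .
qed

lemma quadratic_form_le_of_sphere_max:
  assumes K: "finite K"
    and max: "\<And>y. cinner K y y = 1 \<Longrightarrow> P y \<Longrightarrow> Re (cinner K (mat_apply K A y) y) \<le> \<mu>"
    and scale: "\<And>c y. P y \<Longrightarrow> P (\<lambda>a. complex_of_real c * y a)"
    and x: "P x"
  shows "Re (cinner K (mat_apply K A x) x) \<le> \<mu> * Re (cinner K x x)"
proof (cases "Re (cinner K x x) = 0")
  case True
  then have "cinner K x x = 0" using cinner_self_real[of K x] by simp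
  then have "x a = 0" if "a \<in> K" for a using cinner_self_eq_0[OF K] that by blast
  then have "cinner K (mat_apply K A x) x = 0" unfolding cinner_def by simp
  then show ?thesis using True by simp
next
  case False
  define t where "t = Re (cinner K x x)"
  define c where "c = 1 / sqrt t"
  define y where "y = (\<lambda>a. complex_of_real c * x a)"
  have "t > 0" using False cinner_self_Re[of K x] unfolding t_def by (simp add: sum_nonneg less_le)
  then have ct: "c * c * t = 1"
    unfolding c_def by (simp add: power2_eq_square[symmetric] power_divide)
  have "cinner K y y = complex_of_real (c * c * t)"
    unfolding y_def cinner_self_eq_scale t_def by (simp add: cinner_self_real[symmetric])
  then have "Re (cinner K (mat_apply K A y) y) \<le> \<mu>"
    using ct scale[OF x] by (intro max) (simp_all add: y_def)
  moreover have "cinner K (mat_apply K A y) y =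
      complex_of_real (c * c) * cinner K (mat_apply K A x) x"
    unfolding y_def mat_apply_scale cinner_scale_left cinner_scale_right by simp
  ultimately have "c * c * Re (cinner K (mat_apply K A x) x) * t \<le> \<mu> * t"
    using \<open>t > 0\<close> by (intro mult_right_mono) simp_all
  moreover have "c * c * Re (cinner K (mat_apply K A x) x) * t =
      (c * c * t) * Re (cinner K (mat_apply K A x) x)"
    by (simp only: mult_ac)
  ultimately show ?thesis using ct unfolding t_def by simp
qed

lemma compact_unit_vectors_orth:
  fixes u :: "'i \<Rightarrow> 'k \<Rightarrow> complex"
  assumes K: "finite K"
  shows "compact {v. (\<forall>a. a \<notin> K \<longrightarrow> v a = 0) \<and> cinner K v v = 1 \<and> (\<forall>l\<in>I. cinner K v (u l) = 0)}"
proof -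
  define S where "S = PiE UNIV (\<lambda>a. if a \<in> K then cball (0::complex) 1 else {0})"
  define W where "W = {v. cinner K v v = 1} \<inter> (\<Inter>l\<in>I. {v. cinner K v (u l) = 0})"
  have "cmod (v a) \<le> 1" if "cinner K v v = 1" "a \<in> K" for v a
  proof -
    have "(cmod (v a))\<^sup>2 \<le> (\<Sum>m\<in>K. (cmod (v m))\<^sup>2)"
      using K that by (intro member_le_sum) auto
    also have "\<dots> = 1" using that cinner_self_Re[of K v] by simp
    finally show ?thesis by (simp add: power_le_one_iff abs_square_le_1)
  qed
  then have "{v. (\<forall>a. a \<notin> K \<longrightarrow> v a = 0) \<and> cinner K v v = 1 \<and> (\<forall>l\<in>I. cinner K v (u l) = 0)} = S \<inter> W"
    unfolding S_def W_def by (auto simp: PiE_iff mem_cball dist_0_norm) (metis empty_iff insertE)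
  moreover have "compactin (product_topology (\<lambda>_. euclidean) UNIV) S"
    unfolding S_def by (subst compactin_PiE) auto
  moreover have "closed W"
    unfolding W_def by (intro closed_Int closed_INT ballI closed_Collect_eq continuous_intros
        continuous_on_product_coordinates)
  ultimately show ?thesis
    by (simp add: compact_Int_closed euclidean_product_topology)
qed

lemma exists_max_quadratic_form_orth:
  fixes A :: "'k \<Rightarrow> 'k \<Rightarrow> complex" and u :: "'i \<Rightarrow> 'k \<Rightarrow> complex"
  assumes K: "finite K" and I: "finite I" and u: "orthonormal_family K I u"
    and card: "card I < card K"
  obtains v where "cinner K v v = 1" and "\<forall>l\<in>I. cinner K v (u l) = 0"
    and "\<And>y. cinner K y y = 1 \<Longrightarrow> \<forall>l\<in>I. cinner K y (u l) = 0 \<Longrightarrow>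
           Re (cinner K (mat_apply K A y) y) \<le> Re (cinner K (mat_apply K A v) v)"
proof -
  define f where "f v = Re (cinner K (mat_apply K A v) v)" for v
  define W where "W = {v. cinner K v v = 1 \<and> (\<forall>l\<in>I. cinner K v (u l) = 0)}"
  define C where "C = {v. (\<forall>a. a \<notin> K \<longrightarrow> v a = 0) \<and> v \<in> W}"
  \<comment> \<open>Vectors are total functions; only those vanishing outside \<open>K\<close> form a compact sphere.\<close>
  define cut where "cut v = (\<lambda>a. if a \<in> K then v a else 0)" for v :: "'k \<Rightarrow> complex"
  have cut_C: "cut v \<in> C" and f_cut: "f (cut v) = f v" if "v \<in> W" for v
  proof -
    have "cinner K (cut v) w = cinner K v w" "cinner K w (cut v) = cinner K w v" for w
      unfolding cut_def by (auto intro: cinner_cong)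
    moreover have "mat_apply K A (cut v) = mat_apply K A v"
      unfolding cut_def mat_apply_def by (auto intro: sum.cong)
    ultimately show "cut v \<in> C" "f (cut v) = f v"
      using that unfolding C_def W_def f_def cut_def by simp_all
  qed
  have "compact C"
    using compact_unit_vectors_orth[OF K, of I u] unfolding C_def W_def by simp
  moreover obtain v1 where "v1 \<in> W"
    using orthonormal_family_extend[OF K I u card] unfolding W_def by blast
  then have "C \<noteq> {}" using cut_C by blast
  moreover have "continuous_on UNIV f"
    unfolding f_def by (intro continuous_intros continuous_on_product_coordinates)
  then have "continuous_on C f"
    by (rule continuous_on_subset) simp
  ultimately obtain v where "v \<in> C" and v_max: "\<forall>y\<in>C. f y \<le> f v"
    using continuous_attains_sup by blast
  show ?thesis
  proof (rule that)
    show "cinner K v v = 1" "\<forall>l\<in>I. cinner K v (u l) = 0"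
      using \<open>v \<in> C\<close> unfolding C_def W_def by auto
    show "Re (cinner K (mat_apply K A y) y) \<le> Re (cinner K (mat_apply K A v) v)"
      if "cinner K y y = 1" "\<forall>l\<in>I. cinner K y (u l) = 0" for y
    proof -
      have "y \<in> W" using that unfolding W_def by simp
      then show ?thesis using v_max cut_C f_cut unfolding f_def by metis
    qed
  qed
qed

lemma mat_apply_shift:
  assumes "finite K" "a \<in> K"
  shows "mat_apply K (\<lambda>a b. (if a = b then c else 0) - A a b) x a = c * x a - mat_apply K A x a"
  using assms by (simp add: mat_apply_def left_diff_distrib sum_subtractf if_distrib[of "\<lambda>t. t * _"]
      cong: if_cong)

lemma cinner_mat_apply_shift:
  assumes "finite K"
  shows "cinner K (mat_apply K (\<lambda>a b. (if a = b then c else 0) - A a b) x) y =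
    c * cinner K x y - cinner K (mat_apply K A x) y"
proof -
  have "cinner K (mat_apply K (\<lambda>a b. (if a = b then c else 0) - A a b) x) y =
      cinner K (\<lambda>a. c * x a - mat_apply K A x a) y"
    using assms by (intro cinner_cong mat_apply_shift) auto
  then show ?thesis by (simp add: cinner_diff_left cinner_scale_left)
qed

lemma hermitian_on_shift:
  assumes "hermitian_on K A"
  shows "hermitian_on K (\<lambda>a b. (if a = b then complex_of_real \<mu> else 0) - A a b)"
  unfolding hermitian_on_def
proof (intro ballI)
  fix a b assume "a \<in> K" "b \<in> K"
  then have A: "A a b = cnj (A b a)" using assms unfolding hermitian_on_def by blast
  have "(if a = b then complex_of_real \<mu> else 0) - A a b =
      (if a = b then complex_of_real \<mu> else 0) - cnj (A b a)"
    unfolding A ..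
  also have "\<dots> = cnj ((if b = a then complex_of_real \<mu> else 0) - A b a)"
    by auto
  finally show "(if a = b then complex_of_real \<mu> else 0) - A a b =
      cnj ((if b = a then complex_of_real \<mu> else 0) - A b a)" .
qed

lemma hermitian_orth_eigenvectors_invariant:
  assumes A: "hermitian_on K A" and eig: "eigenvectors_on K A I u lam"
    and x: "\<forall>l\<in>I. cinner K x (u l) = 0"
  shows "\<forall>l\<in>I. cinner K (mat_apply K A x) (u l) = 0"
proof
  fix l assume l: "l \<in> I"
  have "cinner K (mat_apply K A x) (u l) = cinner K x (\<lambda>a. complex_of_real (lam l) * u l a)"
    unfolding hermitian_cinner[OF A]
    using eig l unfolding eigenvectors_on_def by (intro cinner_cong) auto
  then show "cinner K (mat_apply K A x) (u l) = 0"
    using x l unfolding cinner_scale_right by simp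
qed

lemma hermitian_eigenvector_orth:
  fixes A :: "'k \<Rightarrow> 'k \<Rightarrow> complex" and u :: "'i \<Rightarrow> 'k \<Rightarrow> complex"
  assumes K: "finite K" and A: "hermitian_on K A" and I: "finite I"
    and u: "orthonormal_family K I u" and eig: "eigenvectors_on K A I u lam"
    and card: "card I < card K"
  obtains v \<mu> where "cinner K v v = 1" and "\<forall>l\<in>I. cinner K v (u l) = 0"
    and "\<forall>a\<in>K. mat_apply K A v a = complex_of_real \<mu> * v a"
proof -
  define P where "P x \<longleftrightarrow> (\<forall>l\<in>I. cinner K x (u l) = 0)" for x
  obtain v where v1: "cinner K v v = 1" and "P v"
    and v_max: "\<And>y. cinner K y y = 1 \<Longrightarrow> P y \<Longrightarrow>
      Re (cinner K (mat_apply K A y) y) \<le> Re (cinner K (mat_apply K A v) v)"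
    using exists_max_quadratic_form_orth[OF K I u card, of A] unfolding P_def by metis
  define \<mu> where "\<mu> = Re (cinner K (mat_apply K A v) v)"
  \<comment> \<open>\<open>\<mu> - A\<close> is positive semidefinite on the orthogonal complement and its form vanishes at
    the maximiser \<open>v\<close>, so \<open>v\<close> lies in its kernel.\<close>
  define B where "B a b = (if a = b then complex_of_real \<mu> else 0) - A a b" for a b
  note B_apply = cinner_mat_apply_shift[OF K, of "complex_of_real \<mu>" A, folded B_def]
  have P_add: "P (\<lambda>a. x a + complex_of_real \<tau> * y a)" if "P x" "P y" for x y \<tau>
    using that unfolding P_def cinner_add_scale_left by simp
  have P_scale: "P (\<lambda>a. complex_of_real c * y a)" if "P y" for c y
    using that unfolding P_def cinner_scale_left by simp
  have B_nonneg: "0 \<le> Re (cinner K (mat_apply K B x) x)" if "P x" for x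
    using quadratic_form_le_of_sphere_max[OF K v_max P_scale that] unfolding B_apply \<mu>_def
    by simp
  have P_Bv: "P (mat_apply K B v)"
    using \<open>P v\<close> hermitian_orth_eigenvectors_invariant[OF A eig, of v] unfolding P_def B_apply
    by simp
  have Bv_v: "Re (cinner K (mat_apply K B v) v) = 0"
    unfolding B_apply v1 \<mu>_def by simp
  have "mat_apply K B v a = 0" if "a \<in> K" for a
    using hermitian_on_shift[OF A, of \<mu>, folded B_def]
    by (rule hermitian_form_zero_imp_kernel[OF K _ B_nonneg P_add \<open>P v\<close> P_Bv Bv_v that])
  then have "\<forall>a\<in>K. mat_apply K A v a = complex_of_real \<mu> * v a"
    using K unfolding B_def by (simp add: mat_apply_shift)
  with v1 \<open>P v\<close> show ?thesis unfolding P_def by (rule that)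
qed

lemma hermitian_orthonormal_eigenvectors:
  fixes A :: "'k \<Rightarrow> 'k \<Rightarrow> complex"
  assumes K: "finite K" and A: "hermitian_on K A"
  shows "n \<le> card K \<Longrightarrow>
    \<exists>u lam. orthonormal_family K {..<n} u \<and> eigenvectors_on K A {..<n} u lam"
proof (induction n)
  case 0
  show ?case by (auto simp: orthonormal_family_def eigenvectors_on_def)
next
  case (Suc n)
  then obtain u lam where u: "orthonormal_family K {..<n} u"
    and eig: "eigenvectors_on K A {..<n} u lam" by auto
  obtain v \<mu> where v: "cinner K v v = 1" "\<forall>l\<in>{..<n}. cinner K v (u l) = 0"
    "\<forall>a\<in>K. mat_apply K A v a = complex_of_real \<mu> * v a"
    using hermitian_eigenvector_orth[OF K A _ u eig] Suc.prems by auto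
  have "orthonormal_family K {..<Suc n} (u(n := v))"
    unfolding orthonormal_family_def
  proof (intro ballI)
    fix k l assume "k \<in> {..<Suc n}" "l \<in> {..<Suc n}"
    then consider "k = n" "l = n" | "k = n" "l < n" | "k < n" "l = n" | "k < n" "l < n"
      by fastforce
    then show "cinner K ((u(n := v)) k) ((u(n := v)) l) = (if k = l then 1 else 0)"
    proof cases
      case 3
      then show ?thesis using v(2) cinner_commute[of K "u k" v] by simp
    qed (use u v in \<open>auto simp: orthonormal_family_def\<close>)
  qed
  moreover have "eigenvectors_on K A {..<Suc n} (u(n := v)) (lam(n := \<mu>))"
    using eig v unfolding eigenvectors_on_def by (auto simp: less_Suc_eq)
  ultimately show ?case by blast
qed

theorem hermitian_orthonormal_eigenbasis:
  fixes A :: "'k \<Rightarrow> 'k \<Rightarrow> complex"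
  assumes K: "finite K" and A: "hermitian_on K A"
  obtains u lam where "orthonormal_eigenbasis K A u lam"
proof -
  obtain u lam where u: "orthonormal_family K {..<card K} u"
    and eig: "eigenvectors_on K A {..<card K} u lam"
    using hermitian_orthonormal_eigenvectors[OF K A] by blast
  obtain g where g: "bij_betw g K {..<card K}"
    using ex_bij_betw_finite_nat[OF K] atLeast0LessThan by metis
  have "orthonormal_family K K (u \<circ> g)"
    using u bij_betw_apply[OF g] bij_betw_inv_into_left[OF g] unfolding orthonormal_family_def
    by (metis comp_apply)
  moreover have "eigenvectors_on K A K (u \<circ> g) (lam \<circ> g)"
    using eig bij_betw_apply[OF g] unfolding eigenvectors_on_def by simp
  ultimately show ?thesis
    using that unfolding orthonormal_eigenbasis_iff by blast
qed

section \<open>Entropy inequalities\<close>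

text \<open>Since \<open>ln 0 = 0\<close>, \<open>xlnx 0 = 0\<close> matches the convention \<open>0 log 0 = 0\<close>.\<close>

definition xlnx :: "real \<Rightarrow> real" where
  "xlnx t = t * ln t"

lemma xlnx_tangent:
  assumes "0 < p" "0 \<le> x"
  shows "xlnx p + (ln p + 1) * (x - p) \<le> xlnx x"
    and "xlnx x = xlnx p + (ln p + 1) * (x - p) \<Longrightarrow> x = p"
proof -
  have tangent: "xlnx x - (xlnx p + (ln p + 1) * (x - p)) = p - x - x * ln (p / x)" if "0 < x"
    using assms that by (simp add: xlnx_def ln_div algebra_simps)
  have "x * ln (p / x) \<le> p - x" if "0 < x"
    using mult_left_mono[OF ln_le_minus_one[of "p / x"], of x] assms that
    by (simp add: right_diff_distrib)
  then show "xlnx p + (ln p + 1) * (x - p) \<le> xlnx x"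
    using tangent assms by (cases "x = 0") (auto simp: xlnx_def algebra_simps)
  assume eq: "xlnx x = xlnx p + (ln p + 1) * (x - p)"
  show "x = p"
  proof (cases "x = 0")
    case True
    then show ?thesis using eq assms by (simp add: xlnx_def algebra_simps)
  next
    case False
    then have "0 < x" using assms by simp
    then have "ln (p / x) = p / x - 1"
      using eq tangent by (simp add: field_simps)
    then have "p / x = 1" using \<open>0 < x\<close> assms by (intro ln_eq_minus_one) auto
    then show ?thesis using \<open>0 < x\<close> by simp
  qed
qed

lemma xlnx_convex_combination:
  assumes K: "finite K" and w: "\<forall>k\<in>K. 0 \<le> w k" "sum w K = 1" and x: "\<forall>k\<in>K. 0 \<le> x k"
  shows "xlnx (\<Sum>k\<in>K. w k * x k) \<le> (\<Sum>k\<in>K. w k * xlnx (x k))"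
proof -
  define p where "p = (\<Sum>k\<in>K. w k * x k)"
  have "0 \<le> p" unfolding p_def using w x by (simp add: sum_nonneg)
  show ?thesis
  proof (cases "p = 0")
    case True
    then have "\<forall>k\<in>K. w k * x k = 0"
      using K w x unfolding p_def by (subst (asm) sum_nonneg_eq_0_iff) auto
    then have "\<forall>k\<in>K. w k * xlnx (x k) = 0" unfolding xlnx_def by auto
    then have "(\<Sum>k\<in>K. w k * xlnx (x k)) = 0" by (simp only: sum.neutral)
    then show ?thesis using True unfolding p_def by (simp add: xlnx_def)
  next
    case False
    with \<open>0 \<le> p\<close> have "0 < p" by simp
    have "(\<Sum>k\<in>K. w k * (xlnx p + (ln p + 1) * (x k - p))) \<le> (\<Sum>k\<in>K. w k * xlnx (x k))"
      using xlnx_tangent(1)[OF \<open>0 < p\<close>] w x by (intro sum_mono mult_left_mono) auto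
    moreover have "(\<Sum>k\<in>K. w k * (xlnx p + (ln p + 1) * (x k - p))) =
        sum w K * xlnx p + (ln p + 1) * ((\<Sum>k\<in>K. w k * x k) - sum w K * p)"
      by (simp add: algebra_simps sum.distrib sum_subtractf sum_distrib_left sum_distrib_right)
    then have "(\<Sum>k\<in>K. w k * (xlnx p + (ln p + 1) * (x k - p))) = xlnx p"
      using w(2) unfolding p_def[symmetric] by simp
    ultimately show ?thesis unfolding p_def by simp
  qed
qed

lemma doubly_stochastic_sum_xlnx_le:
  assumes K: "finite K" and L: "finite L"
    and D: "\<forall>l\<in>L. \<forall>k\<in>K. 0 \<le> D l k"
    and rows: "\<forall>l\<in>L. (\<Sum>k\<in>K. D l k) = 1" and cols: "\<forall>k\<in>K. (\<Sum>l\<in>L. D l k) = 1"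
    and \<mu>: "\<forall>k\<in>K. 0 \<le> \<mu> k"
  shows "(\<Sum>l\<in>L. xlnx (\<Sum>k\<in>K. D l k * \<mu> k)) \<le> (\<Sum>k\<in>K. xlnx (\<mu> k))"
proof -
  have "(\<Sum>l\<in>L. xlnx (\<Sum>k\<in>K. D l k * \<mu> k)) \<le> (\<Sum>l\<in>L. \<Sum>k\<in>K. D l k * xlnx (\<mu> k))"
    using D rows \<mu> by (intro sum_mono xlnx_convex_combination[OF K]) auto
  also have "\<dots> = (\<Sum>k\<in>K. \<Sum>l\<in>L. D l k * xlnx (\<mu> k))"
    by (rule sum.swap)
  also have "\<dots> = (\<Sum>k\<in>K. xlnx (\<mu> k))"
    using cols by (simp add: sum_distrib_right[symmetric])
  finally show ?thesis .
qed

lemma gibbs_pointwise: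
  fixes x y :: real
  assumes "0 \<le> x" "0 \<le> y" "0 < x \<Longrightarrow> 0 < y"
  shows "x - y \<le> x * ln x - x * ln y"
    and "x * ln x - x * ln y = x - y \<Longrightarrow> x = y"
proof -
  have tangent: "xlnx y + (ln y + 1) * (x - y) = x * ln y + (x - y)" if "0 < y"
    unfolding xlnx_def by (simp add: algebra_simps)
  show "x - y \<le> x * ln x - x * ln y"
    using xlnx_tangent(1)[of y x] tangent assms by (cases "x = 0") (auto simp: xlnx_def)
  show "x = y" if "x * ln x - x * ln y = x - y"
    using xlnx_tangent(2)[of y x] tangent assms that by (cases "x = 0") (auto simp: xlnx_def)
qed

lemma gibbs_equality:
  fixes p q :: "'i \<Rightarrow> real"
  assumes I: "finite I" and p: "\<forall>k\<in>I. 0 \<le> p k"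
    and q: "\<forall>k\<in>I. 0 \<le> q k \<and> (0 < p k \<longrightarrow> 0 < q k)"
    and sums: "sum p I = sum q I"
    and le: "(\<Sum>k\<in>I. p k * ln (p k)) \<le> (\<Sum>k\<in>I. p k * ln (q k))"
  shows "\<forall>k\<in>I. p k = q k"
proof -
  define G where "G k = p k * ln (p k) - p k * ln (q k) - (p k - q k)" for k
  have G_nonneg: "\<forall>k\<in>I. 0 \<le> G k"
    using gibbs_pointwise(1) p q unfolding G_def by auto
  have "sum G I = (\<Sum>k\<in>I. p k * ln (p k)) - (\<Sum>k\<in>I. p k * ln (q k)) - (sum p I - sum q I)"
    unfolding G_def by (simp add: sum_subtractf)
  then have "sum G I \<le> 0"
    using le sums by simp
  then have "\<forall>k\<in>I. G k = 0"
    using I G_nonneg sum_nonneg_eq_0_iff[of I G] by (simp add: sum_nonneg antisym)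
  then show ?thesis
    using gibbs_pointwise(2) p q unfolding G_def by auto
qed

lemma sum_ln_product_of_marginals:
  fixes p :: "'a \<Rightarrow> 'b \<Rightarrow> real"
  assumes A: "finite A" and B: "finite B" and p: "\<forall>a\<in>A. \<forall>b\<in>B. 0 \<le> p a b"
  defines "q \<equiv> \<lambda>a. \<Sum>b\<in>B. p a b" and "r \<equiv> \<lambda>b. \<Sum>a\<in>A. p a b"
  shows "(\<Sum>a\<in>A. \<Sum>b\<in>B. p a b * ln (q a * r b)) = (\<Sum>a\<in>A. xlnx (q a)) + (\<Sum>b\<in>B. xlnx (r b))"
proof -
  have "p a b * ln (q a * r b) = p a b * ln (q a) + p a b * ln (r b)" if "a \<in> A" "b \<in> B" for a b
  proof (cases "p a b = 0")
    case False
    then have "0 < p a b" using p that by force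
    then have "0 < q a" "0 < r b"
      unfolding q_def r_def using A B p that by (auto intro!: sum_pos2)
    then show ?thesis by (simp add: ln_mult distrib_left)
  qed simp
  then have "(\<Sum>a\<in>A. \<Sum>b\<in>B. p a b * ln (q a * r b)) =
      (\<Sum>a\<in>A. \<Sum>b\<in>B. p a b * ln (q a)) + (\<Sum>a\<in>A. \<Sum>b\<in>B. p a b * ln (r b))"
    by (simp add: sum.distrib)
  also have "(\<Sum>a\<in>A. \<Sum>b\<in>B. p a b * ln (r b)) = (\<Sum>b\<in>B. \<Sum>a\<in>A. p a b * ln (r b))"
    by (rule sum.swap)
  also have "(\<Sum>a\<in>A. \<Sum>b\<in>B. p a b * ln (q a)) + (\<Sum>b\<in>B. \<Sum>a\<in>A. p a b * ln (r b)) =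
      (\<Sum>a\<in>A. xlnx (q a)) + (\<Sum>b\<in>B. xlnx (r b))"
    unfolding q_def r_def xlnx_def by (simp add: sum_distrib_right)
  finally show ?thesis .
qed

lemma entropy_additive_imp_independent:
  fixes p :: "'a \<Rightarrow> 'b \<Rightarrow> real"
  assumes A: "finite A" and B: "finite B" and p: "\<forall>a\<in>A. \<forall>b\<in>B. 0 \<le> p a b"
    and total: "(\<Sum>a\<in>A. \<Sum>b\<in>B. p a b) = 1"
    and additive: "(\<Sum>a\<in>A. \<Sum>b\<in>B. xlnx (p a b)) \<le>
      (\<Sum>a\<in>A. xlnx (\<Sum>b\<in>B. p a b)) + (\<Sum>b\<in>B. xlnx (\<Sum>a\<in>A. p a b))"
    and a: "a \<in> A" and b: "b \<in> B"
  shows "p a b = (\<Sum>b\<in>B. p a b) * (\<Sum>a\<in>A. p a b)"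
proof -
  define q where "q a = (\<Sum>b\<in>B. p a b)" for a
  define r where "r b = (\<Sum>a\<in>A. p a b)" for b
  define P where "P = (\<lambda>(a, b). p a b)"
  define Q where "Q = (\<lambda>(a, b). q a * r b)"
  have le: "(\<Sum>x\<in>A \<times> B. P x * ln (P x)) \<le> (\<Sum>x\<in>A \<times> B. P x * ln (Q x))"
    using additive sum_ln_product_of_marginals[OF A B p]
    unfolding q_def[symmetric] r_def[symmetric] xlnx_def P_def Q_def sum.cartesian_product' by simp
  have sums: "sum P (A \<times> B) = sum Q (A \<times> B)"
  proof -
    have "sum Q (A \<times> B) = (\<Sum>a\<in>A. q a) * (\<Sum>b\<in>B. r b)"
      unfolding Q_def sum.cartesian_product' by (simp add: sum_product)
    moreover have "(\<Sum>b\<in>B. r b) = (\<Sum>a\<in>A. q a)" "(\<Sum>a\<in>A. q a) = sum P (A \<times> B)"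
      unfolding P_def q_def r_def sum.cartesian_product' by (simp_all add: sum.swap[of _ B])
    ultimately show ?thesis using total unfolding P_def sum.cartesian_product' by simp
  qed
  have P_nonneg: "\<forall>x\<in>A \<times> B. 0 \<le> P x"
    using p unfolding P_def by auto
  have Q_pos: "\<forall>x\<in>A \<times> B. 0 \<le> Q x \<and> (0 < P x \<longrightarrow> 0 < Q x)"
  proof
    fix x assume "x \<in> A \<times> B"
    then obtain a b where x: "x = (a, b)" and ab: "a \<in> A" "b \<in> B" by blast
    have "0 \<le> q a" "0 \<le> r b"
      unfolding q_def r_def using p ab by (auto intro: sum_nonneg)
    moreover have "0 < q a" "0 < r b" if "0 < p a b"
      unfolding q_def r_def using A B p ab that by (auto intro!: sum_pos2)
    ultimately show "0 \<le> Q x \<and> (0 < P x \<longrightarrow> 0 < Q x)"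
      unfolding x P_def Q_def by simp
  qed
  have "\<forall>x\<in>A \<times> B. P x = Q x"
    by (rule gibbs_equality[OF finite_cartesian_product[OF A B] P_nonneg Q_pos sums le])
  then have "P (a, b) = Q (a, b)" using a b by blast
  then show ?thesis unfolding P_def Q_def q_def r_def by simp
qed

section \<open>Von Neumann entropy and diagonal entropies\<close>

lemma eigenbasis_quadratic_form:
  assumes K: "finite K" and I: "finite I" and u: "orthonormal_family K I u"
    and card: "card I = card K" and eig: "eigenvectors_on K A I u \<mu>"
  shows "Re (cinner K (mat_apply K A w) w) = (\<Sum>k\<in>I. \<mu> k * (cmod (cinner K w (u k)))\<^sup>2)"
proof -
  have "mat_apply K A w a = (\<Sum>k\<in>I. (cinner K w (u k) * complex_of_real (\<mu> k)) * u k a)"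
    if "a \<in> K" for a
  proof -
    have "mat_apply K A w a = (\<Sum>b\<in>K. A a b * (\<Sum>k\<in>I. cinner K w (u k) * u k b))"
      unfolding mat_apply_def using orthonormal_basis_expansion[OF K I u card]
      by (intro sum.cong) auto
    also have "\<dots> = (\<Sum>k\<in>I. cinner K w (u k) * mat_apply K A (u k) a)"
      unfolding mat_apply_def by (simp add: sum_distrib_left mult_ac sum.swap[of _ K])
    also have "\<dots> = (\<Sum>k\<in>I. (cinner K w (u k) * complex_of_real (\<mu> k)) * u k a)"
      using eig that unfolding eigenvectors_on_def by (intro sum.cong) auto
    finally show ?thesis .
  qed
  then have "cinner K (mat_apply K A w) w =
      cinner K (\<lambda>a. \<Sum>k\<in>I. (cinner K w (u k) * complex_of_real (\<mu> k)) * u k a) w"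
    by (intro cinner_cong) auto
  also have "\<dots> = (\<Sum>k\<in>I. complex_of_real (\<mu> k) * (cinner K w (u k) * cnj (cinner K w (u k))))"
    unfolding cinner_sum_left by (simp add: cinner_commute[of K "u _" w] mult_ac)
  also have "\<dots> = complex_of_real (\<Sum>k\<in>I. \<mu> k * (cmod (cinner K w (u k)))\<^sup>2)"
    unfolding of_real_sum of_real_mult complex_norm_square ..
  finally show ?thesis by simp
qed

lemma diagonal_xlnx_le_eigenvalues:
  assumes K: "finite K" and I: "finite I" and L: "finite L"
    and card: "card I = card K" "card L = card K"
    and u: "orthonormal_family K I u" and eig: "eigenvectors_on K A I u \<mu>"
    and \<mu>: "\<forall>k\<in>I. 0 \<le> \<mu> k" and w: "orthonormal_family K L w"
  shows "(\<Sum>l\<in>L. xlnx (Re (cinner K (mat_apply K A (w l)) (w l)))) \<le> (\<Sum>k\<in>I. xlnx (\<mu> k))"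
proof -
  \<comment> \<open>The diagonal in the basis \<open>w\<close> is the image of the spectrum under the doubly stochastic \<open>D\<close>.\<close>
  define D where "D l k = (cmod (cinner K (w l) (u k)))\<^sup>2" for l k
  have "\<forall>l\<in>L. (\<Sum>k\<in>I. D l k) = 1"
    using orthonormal_basis_parseval[OF K I u card(1)] w
    unfolding D_def orthonormal_family_def by simp
  moreover have "\<forall>k\<in>I. (\<Sum>l\<in>L. D l k) = 1"
  proof
    fix k assume "k \<in> I"
    have "D l k = (cmod (cinner K (u k) (w l)))\<^sup>2" for l
      unfolding D_def by (subst cinner_commute) simp
    then show "(\<Sum>l\<in>L. D l k) = 1"
      using orthonormal_basis_parseval[OF K L w card(2), of "u k"] u \<open>k \<in> I\<close>
      unfolding orthonormal_family_def by simp
  qed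
  moreover have "Re (cinner K (mat_apply K A (w l)) (w l)) = (\<Sum>k\<in>I. D l k * \<mu> k)" for l
    unfolding eigenbasis_quadratic_form[OF K I u card(1) eig] D_def by (simp add: mult_ac)
  ultimately show ?thesis
    using doubly_stochastic_sum_xlnx_le[OF I L _ _ _ \<mu>] by (simp add: D_def)
qed

lemma vn_entropy_obtain_eigenbasis:
  assumes "finite K" "hermitian_on K A"
  obtains u \<mu> where "orthonormal_eigenbasis K A u \<mu>"
    and "vn_entropy K A * ln 2 = - (\<Sum>k\<in>K. xlnx (\<mu> k))"
proof -
  obtain u0 \<mu>0 where "orthonormal_eigenbasis K A u0 \<mu>0"
    using hermitian_orthonormal_eigenbasis[OF assms] .
  then have "\<exists>h u \<mu>. orthonormal_eigenbasis K A u \<mu> \<and>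
      h = - (\<Sum>k\<in>K. if \<mu> k = 0 then 0 else \<mu> k * log 2 (\<mu> k))"
    by blast
  then have "\<exists>u \<mu>. orthonormal_eigenbasis K A u \<mu> \<and>
      vn_entropy K A = - (\<Sum>k\<in>K. if \<mu> k = 0 then 0 else \<mu> k * log 2 (\<mu> k))"
    unfolding vn_entropy_def by (rule someI_ex)
  then obtain u \<mu> where "orthonormal_eigenbasis K A u \<mu>"
    and h: "vn_entropy K A = - (\<Sum>k\<in>K. if \<mu> k = 0 then 0 else \<mu> k * log 2 (\<mu> k))"
    by blast
  moreover have "(if t = 0 then 0 else t * log 2 t) = xlnx t / ln 2" for t
    unfolding xlnx_def log_def by simp
  ultimately show ?thesis
    using that by (simp add: sum_divide_distrib[symmetric])
qed

lemma vn_entropy_le_diagonal: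
  assumes K: "finite K" and A: "hermitian_on K A"
    and psd: "\<And>v. 0 \<le> Re (cinner K (mat_apply K A v) v)"
    and L: "finite L" "card L = card K" and w: "orthonormal_family K L w"
  shows "(\<Sum>l\<in>L. xlnx (Re (cinner K (mat_apply K A (w l)) (w l)))) \<le> - (vn_entropy K A * ln 2)"
proof -
  obtain u \<mu> where u: "orthonormal_eigenbasis K A u \<mu>"
    and h: "vn_entropy K A * ln 2 = - (\<Sum>k\<in>K. xlnx (\<mu> k))"
    using vn_entropy_obtain_eigenbasis[OF K A] .
  have onf: "orthonormal_family K K u" and eig: "eigenvectors_on K A K u \<mu>"
    using u unfolding orthonormal_eigenbasis_iff by auto
  have "\<forall>k\<in>K. 0 \<le> \<mu> k"
    using psd eigenvectors_on_cinner[OF eig onf] by (metis Re_complex_of_real)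
  from diagonal_xlnx_le_eigenvalues[OF K K L(1) refl L(2) onf eig this w] show ?thesis
    unfolding h by simp
qed

text \<open>\<open>vn_entropy\<close> is computed from an arbitrary eigenbasis chosen by \<open>SOME\<close>; comparing diagonals
  in both directions shows that every eigenbasis gives the same value.\<close>

lemma vn_entropy_eq_eigenvalues:
  assumes K: "finite K" and A: "hermitian_on K A"
    and I: "finite I" "card I = card K" and u: "orthonormal_family K I u"
    and eig: "eigenvectors_on K A I u \<mu>" and \<mu>: "\<forall>k\<in>I. 0 \<le> \<mu> k"
  shows "vn_entropy K A * ln 2 = - (\<Sum>k\<in>I. xlnx (\<mu> k))"
proof (rule antisym)
  have "0 \<le> Re (cinner K (mat_apply K A v) v)" for v
    unfolding eigenbasis_quadratic_form[OF K I(1) u I(2) eig] using \<mu> by (simp add: sum_nonneg)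
  from vn_entropy_le_diagonal[OF K A this I u]
  show "vn_entropy K A * ln 2 \<le> - (\<Sum>k\<in>I. xlnx (\<mu> k))"
    using eigenvectors_on_cinner[OF eig u] by simp
  obtain v \<nu> where v: "orthonormal_eigenbasis K A v \<nu>"
    and h: "vn_entropy K A * ln 2 = - (\<Sum>k\<in>K. xlnx (\<nu> k))"
    using vn_entropy_obtain_eigenbasis[OF K A] .
  have onf: "orthonormal_family K K v" and eig_v: "eigenvectors_on K A K v \<nu>"
    using v unfolding orthonormal_eigenbasis_iff by auto
  have "(\<Sum>k\<in>K. xlnx (Re (cinner K (mat_apply K A (v k)) (v k)))) \<le> (\<Sum>k\<in>I. xlnx (\<mu> k))"
    by (rule diagonal_xlnx_le_eigenvalues[OF K I(1) K I(2) refl u eig \<mu> onf])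
  then show "- (\<Sum>k\<in>I. xlnx (\<mu> k)) \<le> vn_entropy K A * ln 2"
    using eigenvectors_on_cinner[OF eig_v onf] unfolding h by simp
qed

section \<open>Sums over product index sets\<close>

definition merge :: "'i set \<Rightarrow> ('i \<Rightarrow> 'a) \<Rightarrow> ('i \<Rightarrow> 'a) \<Rightarrow> 'i \<Rightarrow> 'a" where
  "merge S y w = (\<lambda>i. if i \<in> S then y i else w i)"

lemma bij_betw_merge_fiber:
  assumes "S \<subseteq> U" "y \<in> PiE S B"
  shows "bij_betw (merge S y) (PiE (U - S) B) {x \<in> PiE U B. restrict x S = y}"
proof (rule bij_betw_byWitness[where f' = "\<lambda>x. restrict x (U - S)"])
  show "\<forall>w\<in>PiE (U - S) B. restrict (merge S y w) (U - S) = w"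
    by (auto simp: merge_def PiE_def extensional_def fun_eq_iff)
  show "\<forall>x\<in>{x \<in> PiE U B. restrict x S = y}. merge S y (restrict x (U - S)) = x"
    using assms by (auto simp: merge_def PiE_def extensional_def fun_eq_iff)
  show "merge S y ` PiE (U - S) B \<subseteq> {x \<in> PiE U B. restrict x S = y}"
    using assms by (auto simp: merge_def PiE_def Pi_def extensional_def fun_eq_iff)
  show "(\<lambda>x. restrict x (U - S)) ` {x \<in> PiE U B. restrict x S = y} \<subseteq> PiE (U - S) B"
    by auto
qed

lemma sum_PiE_fiber:
  assumes "S \<subseteq> U" "y \<in> PiE S B"
  shows "(\<Sum>x\<in>{x \<in> PiE U B. restrict x S = y}. f x) = (\<Sum>w\<in>PiE (U - S) B. f (merge S y w))"
  by (rule sum.reindex_bij_betw[OF bij_betw_merge_fiber[OF assms], symmetric])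

lemma sum_PiE_split:
  assumes "S \<subseteq> U" "finite U" "\<And>i. finite (B i)"
  shows "(\<Sum>x\<in>PiE U B. f x) = (\<Sum>y\<in>PiE S B. \<Sum>w\<in>PiE (U - S) B. f (merge S y w))"
proof -
  have "finite (PiE U B)" "finite (PiE S B)"
    using assms finite_subset by (auto intro!: finite_PiE)
  moreover have "(\<lambda>x. restrict x S) ` PiE U B \<subseteq> PiE S B"
    using assms(1) by auto
  ultimately have "(\<Sum>x\<in>PiE U B. f x) = (\<Sum>y\<in>PiE S B. \<Sum>x\<in>{x \<in> PiE U B. restrict x S = y}. f x)"
    by (simp add: sum.group)
  also have "\<dots> = (\<Sum>y\<in>PiE S B. \<Sum>w\<in>PiE (U - S) B. f (merge S y w))"
    using assms(1) by (intro sum.cong refl sum_PiE_fiber)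
  finally show ?thesis .
qed

lemma restrict_eq_PiE_iff:
  assumes "y \<in> PiE S B"
  shows "restrict x S = y \<longleftrightarrow> (\<forall>i\<in>S. x i = y i)"
  using assms by (auto simp: PiE_def extensional_def fun_eq_iff)

lemma bij_betw_PiE_singleton: "bij_betw (\<lambda>s. s i) (PiE {i} B) (B i)"
  by (rule bij_betw_byWitness[where f' = "\<lambda>a. (\<lambda>_. undefined)(i := a)"])
     (auto simp: PiE_def extensional_def fun_eq_iff)

lemma sum_PiE_singleton: "(\<Sum>s\<in>PiE {i} B. f (s i)) = (\<Sum>a\<in>B i. f a)"
  by (rule sum.reindex_bij_betw[OF bij_betw_PiE_singleton])

lemma bij_betw_PiE_pair:
  assumes "i \<noteq> j"
  shows "bij_betw (\<lambda>s. (s i, s j)) (PiE {i, j} B) (B i \<times> B j)"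
  by (rule bij_betw_byWitness[where f' = "\<lambda>(a, b). (\<lambda>_. undefined)(i := a, j := b)"])
     (use assms in \<open>auto simp: PiE_def extensional_def fun_eq_iff\<close>)

lemma prod_delta_PiE:
  assumes "finite T" "w \<in> PiE T B" "w' \<in> PiE T B"
  shows "(\<Prod>i\<in>T. (if w i = w' i then 1 else 0 :: 'a::comm_semiring_1)) = (if w = w' then 1 else 0)"
proof (cases "w = w'")
  case False
  then obtain i where "i \<in> T" "w i \<noteq> w' i" using assms(2,3) by (metis PiE_ext)
  then show ?thesis using assms(1) False by (intro trans[OF prod_zero]) auto
qed simp

section \<open>Reduced states of a pure state\<close>

lemma reduced_eq_sum_merge:
  assumes "S \<subseteq> {..<N}" "y \<in> PiE S (\<lambda>i. {..<d i})"
  shows "reduced N d V S y z =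
    (\<Sum>w\<in>PiE ({..<N} - S) (\<lambda>i. {..<d i}). V (merge S y w) * cnj (V (merge S z w)))"
proof -
  have "(\<lambda>i. if i \<in> S then z i else merge S y w i) = merge S z w" for w
    unfolding merge_def by auto
  then show ?thesis
    unfolding reduced_def configs_def sum_PiE_fiber[OF assms] by simp
qed

lemma reduced_hermitian:
  assumes "S \<subseteq> {..<N}"
  shows "hermitian_on (PiE S (\<lambda>i. {..<d i})) (reduced N d V S)"
  unfolding hermitian_on_def
proof (intro ballI)
  fix y z assume "y \<in> PiE S (\<lambda>i. {..<d i})" "z \<in> PiE S (\<lambda>i. {..<d i})"
  then show "reduced N d V S y z = cnj (reduced N d V S z y)"
    by (simp add: reduced_eq_sum_merge[OF assms] cnj_sum mult.commute)
qed

lemma reduced_quadratic_form: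
  fixes N :: nat and d :: "nat \<Rightarrow> nat" and V f :: "(nat \<Rightarrow> nat) \<Rightarrow> complex"
  assumes S: "S \<subseteq> {..<N}"
  defines "K \<equiv> PiE S (\<lambda>i. {..<d i})"
  shows "cinner K (mat_apply K (reduced N d V S) f) f = complex_of_real
    (\<Sum>w\<in>PiE ({..<N} - S) (\<lambda>i. {..<d i}). (cmod (\<Sum>y\<in>K. V (merge S y w) * cnj (f y)))\<^sup>2)"
proof -
  define C where "C = PiE ({..<N} - S) (\<lambda>i. {..<d i})"
  define g where "g y w = V (merge S y w) * cnj (f y)" for y w
  have "cinner K (mat_apply K (reduced N d V S) f) f = (\<Sum>y\<in>K. \<Sum>z\<in>K. \<Sum>w\<in>C. g y w * cnj (g z w))"
    unfolding cinner_def mat_apply_def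
  proof (rule sum.cong[OF refl])
    fix y assume "y \<in> K"
    then have "reduced N d V S y z * f z * cnj (f y) = (\<Sum>w\<in>C. g y w * cnj (g z w))" for z
      unfolding reduced_eq_sum_merge[OF S \<open>y \<in> K\<close>[unfolded K_def]] g_def C_def
      by (simp add: sum_distrib_left mult_ac)
    then show "(\<Sum>z\<in>K. reduced N d V S y z * f z) * cnj (f y) = (\<Sum>z\<in>K. \<Sum>w\<in>C. g y w * cnj (g z w))"
      by (simp add: sum_distrib_right)
  qed
  also have "\<dots> = (\<Sum>y\<in>K. \<Sum>w\<in>C. \<Sum>z\<in>K. g y w * cnj (g z w))"
    by (rule sum.cong[OF refl], rule sum.swap)
  also have "\<dots> = (\<Sum>w\<in>C. \<Sum>y\<in>K. \<Sum>z\<in>K. g y w * cnj (g z w))"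
    by (rule sum.swap)
  also have "\<dots> = (\<Sum>w\<in>C. (\<Sum>y\<in>K. g y w) * cnj (\<Sum>y\<in>K. g y w))"
    unfolding cnj_sum sum_product ..
  also have "\<dots> = complex_of_real (\<Sum>w\<in>C. (cmod (\<Sum>y\<in>K. g y w))\<^sup>2)"
    unfolding of_real_sum complex_norm_square ..
  finally show ?thesis unfolding g_def C_def .
qed

lemma reduced_psd:
  assumes "S \<subseteq> {..<N}"
  shows "0 \<le> Re (cinner (PiE S (\<lambda>i. {..<d i}))
    (mat_apply (PiE S (\<lambda>i. {..<d i})) (reduced N d V S) f) f)"
  unfolding reduced_quadratic_form[OF assms] by (simp add: sum_nonneg)

definition prod_basis ::
  "(nat \<Rightarrow> nat \<Rightarrow> nat \<Rightarrow> complex) \<Rightarrow> nat set \<Rightarrow> (nat \<Rightarrow> nat) \<Rightarrow> (nat \<Rightarrow> nat) \<Rightarrow> complex"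
  where "prod_basis e S s z = (\<Prod>i\<in>S. e i (s i) (z i))"

lemma prod_basis_orthonormal:
  assumes S: "finite S" and B: "\<And>i. i \<in> S \<Longrightarrow> finite (B i)"
    and e: "\<And>i. i \<in> S \<Longrightarrow> orthonormal_family (B i) (B i) (e i)"
  shows "orthonormal_family (PiE S B) (PiE S B) (prod_basis e S)"
  unfolding orthonormal_family_def
proof (intro ballI)
  fix s t assume s: "s \<in> PiE S B" and t: "t \<in> PiE S B"
  have "cinner (PiE S B) (prod_basis e S s) (prod_basis e S t) =
      (\<Sum>z\<in>PiE S B. \<Prod>i\<in>S. e i (s i) (z i) * cnj (e i (t i) (z i)))"
    unfolding cinner_def prod_basis_def by (simp add: cnj_prod prod.distrib)
  also have "\<dots> = (\<Prod>i\<in>S. \<Sum>c\<in>B i. e i (s i) c * cnj (e i (t i) c))"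
    using S B by (rule prod_sum_PiE[symmetric])
  also have "\<dots> = (\<Prod>i\<in>S. if s i = t i then 1 else 0)"
  proof (rule prod.cong[OF refl])
    fix i assume "i \<in> S"
    then have "s i \<in> B i" "t i \<in> B i" using s t by auto
    then show "(\<Sum>c\<in>B i. e i (s i) c * cnj (e i (t i) c)) = (if s i = t i then 1 else 0)"
      using e[OF \<open>i \<in> S\<close>] unfolding orthonormal_family_def cinner_def by blast
  qed
  also have "\<dots> = (if s = t then 1 else 0)"
    using prod_delta_PiE[OF S s t] .
  finally show "cinner (PiE S B) (prod_basis e S s) (prod_basis e S t) = (if s = t then 1 else 0)" .
qed

lemma prod_basis_merge:
  assumes "S \<subseteq> U" "finite U"
  shows "prod_basis e U (merge S s c) (merge S y w) = prod_basis e S s y * prod_basis e (U - S) c w"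
  unfolding prod_basis_def using assms
  by (subst prod.subset_diff[OF assms])
     (auto simp: merge_def mult.commute intro!: arg_cong2[where f = "(*)"] prod.cong)

lemma coeff_in_basis_eq_cinner:
  "coeff_in_basis N d V e y = cinner (configs N d) V (prod_basis e {..<N} y)"
  unfolding coeff_in_basis_def cinner_def prod_basis_def by (simp add: cnj_prod mult.commute)

lemma reduced_prod_basis_form:
  fixes N :: nat and d :: "nat \<Rightarrow> nat" and V :: "(nat \<Rightarrow> nat) \<Rightarrow> complex"
  assumes S: "S \<subseteq> {..<N}" and s: "s \<in> PiE S (\<lambda>i. {..<d i})"
    and e: "\<forall>i<N. orthonormal_family {..<d i} {..<d i} (e i)"
  defines "K \<equiv> PiE S (\<lambda>i. {..<d i})"
  shows "Re (cinner K (mat_apply K (reduced N d V S) (prod_basis e S s)) (prod_basis e S s)) =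
    (\<Sum>x\<in>{x \<in> configs N d. restrict x S = s}. (cmod (coeff_in_basis N d V e x))\<^sup>2)"
proof -
  define C where "C = {..<N} - S"
  define L where "L = PiE C (\<lambda>i. {..<d i})"
  define h where "h w = (\<Sum>y\<in>K. V (merge S y w) * cnj (prod_basis e S s y))" for w
  have L: "finite L" unfolding L_def C_def by (simp add: finite_PiE)
  have onf_C: "orthonormal_family L L (prod_basis e C)"
    unfolding L_def C_def using e by (intro prod_basis_orthonormal) auto
  have coeff: "coeff_in_basis N d V e (merge S s c) = cinner L h (prod_basis e C c)" for c
  proof -
    have "coeff_in_basis N d V e (merge S s c) =
        (\<Sum>y\<in>K. \<Sum>w\<in>L. V (merge S y w) * cnj (prod_basis e {..<N} (merge S s c) (merge S y w)))"
      unfolding coeff_in_basis_eq_cinner cinner_def configs_def K_def L_def C_def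
      by (rule sum_PiE_split[OF S]) simp_all
    also have "\<dots> = (\<Sum>y\<in>K. \<Sum>w\<in>L.
        V (merge S y w) * cnj (prod_basis e S s y) * cnj (prod_basis e C c w))"
      unfolding prod_basis_merge[OF S finite_lessThan] C_def by (simp add: mult.assoc)
    also have "\<dots> = cinner L h (prod_basis e C c)"
      unfolding cinner_def h_def sum_distrib_right by (rule sum.swap)
    finally show ?thesis .
  qed
  have "Re (cinner K (mat_apply K (reduced N d V S) (prod_basis e S s)) (prod_basis e S s)) =
      Re (cinner L h h)"
    unfolding K_def reduced_quadratic_form[OF S] cinner_self_Re h_def L_def C_def K_def by simp
  also have "\<dots> = (\<Sum>c\<in>L. (cmod (coeff_in_basis N d V e (merge S s c)))\<^sup>2)"
    unfolding coeff using orthonormal_basis_parseval[OF L L onf_C refl] by simp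
  also have "\<dots> = (\<Sum>x\<in>{x \<in> configs N d. restrict x S = s}. (cmod (coeff_in_basis N d V e x))\<^sup>2)"
    unfolding configs_def L_def C_def by (rule sum_PiE_fiber[OF S s, symmetric])
  finally show ?thesis .
qed

section \<open>Statistics of the product eigenbasis measurement\<close>

text \<open>\<open>basis_prob N d V e x\<close> is \<open>|V_{x_1...x_N}|^2\<close> in the notation of the statement.\<close>

definition basis_prob ::
  "nat \<Rightarrow> (nat \<Rightarrow> nat) \<Rightarrow> ((nat \<Rightarrow> nat) \<Rightarrow> complex) \<Rightarrow> (nat \<Rightarrow> nat \<Rightarrow> nat \<Rightarrow> complex)
    \<Rightarrow> (nat \<Rightarrow> nat) \<Rightarrow> real" where
  "basis_prob N d V e x = (cmod (coeff_in_basis N d V e x))\<^sup>2"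

lemma sum_basis_prob:
  assumes "\<forall>i<N. orthonormal_family {..<d i} {..<d i} (e i)"
  shows "sum (basis_prob N d V e) (configs N d) = (\<Sum>x\<in>configs N d. (cmod (V x))\<^sup>2)"
proof -
  have "orthonormal_family (configs N d) (configs N d) (prod_basis e {..<N})"
    unfolding configs_def using assms by (intro prod_basis_orthonormal) auto
  from orthonormal_basis_parseval[OF _ _ this refl, of V] show ?thesis
    unfolding basis_prob_def coeff_in_basis_eq_cinner cinner_self_Re configs_def
    by (simp add: finite_PiE)
qed

lemma entropy_of_le_marginal:
  fixes N :: nat and d :: "nat \<Rightarrow> nat" and V :: "(nat \<Rightarrow> nat) \<Rightarrow> complex"
  assumes S: "S \<subseteq> {..<N}" and e: "\<forall>i<N. orthonormal_family {..<d i} {..<d i} (e i)"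
  shows "(\<Sum>s\<in>PiE S (\<lambda>i. {..<d i}).
      xlnx (sum (basis_prob N d V e) {x \<in> configs N d. restrict x S = s}))
    \<le> - (entropy_of N d V S * ln 2)"
proof -
  define K where "K = PiE S (\<lambda>i. {..<d i})"
  have K: "finite K" unfolding K_def using S finite_subset by (auto intro!: finite_PiE)
  have onf: "orthonormal_family K K (prod_basis e S)"
    unfolding K_def using e S by (intro prod_basis_orthonormal) (auto dest: finite_subset)
  have "(\<Sum>s\<in>K. xlnx (Re (cinner K (mat_apply K (reduced N d V S) (prod_basis e S s))
      (prod_basis e S s))))
      \<le> - (vn_entropy K (reduced N d V S) * ln 2)"
    by (rule vn_entropy_le_diagonal[OF K reduced_hermitian[OF S, of d V, folded K_def]
          reduced_psd[OF S, of d V, folded K_def] K refl onf])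
  then show ?thesis
    using reduced_prod_basis_form[OF S _ e, of _ V]
    unfolding entropy_of_def red_index_set_def basis_prob_def K_def by simp
qed

lemma reduced_singleton_eigenvectors:
  assumes eb: "orthonormal_eigenbasis {..<d i} (reduced1 N d V i) (e i) (lam i)"
  defines "K \<equiv> PiE {i} (\<lambda>i. {..<d i})"
  shows "eigenvectors_on K (reduced N d V {i}) K (prod_basis e {i}) (\<lambda>s. lam i (s i))"
  unfolding eigenvectors_on_def
proof (intro ballI)
  fix s y assume "s \<in> K" "y \<in> K"
  have "reduced N d V {i} y z = reduced1 N d V i (y i) (z i)" if "z \<in> K" for z
  proof -
    have "(\<lambda>_. undefined)(i := y i) = y" "(\<lambda>_. undefined)(i := z i) = z"
      using \<open>y \<in> K\<close> \<open>z \<in> K\<close> unfolding K_def by (auto simp: PiE_def extensional_def fun_eq_iff)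
    then show ?thesis unfolding reduced1_def by simp
  qed
  then have "mat_apply K (reduced N d V {i}) (prod_basis e {i} s) y =
      (\<Sum>b<d i. reduced1 N d V i (y i) b * e i (s i) b)"
    unfolding mat_apply_def prod_basis_def K_def
    using sum_PiE_singleton[where i=i and B="\<lambda>i. {..<d i}"
        and f="\<lambda>b. reduced1 N d V i (y i) b * e i (s i) b"]
    by simp
  also have "\<dots> = complex_of_real (lam i (s i)) * prod_basis e {i} s y"
    using eb PiE_mem[OF \<open>s \<in> K\<close>[unfolded K_def]] PiE_mem[OF \<open>y \<in> K\<close>[unfolded K_def]]
    unfolding orthonormal_eigenbasis_def prod_basis_def by simp
  finally show "mat_apply K (reduced N d V {i}) (prod_basis e {i} s) y =
      complex_of_real (lam i (s i)) * prod_basis e {i} s y" .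
qed

lemma single_party_spectrum:
  fixes N :: nat and d :: "nat \<Rightarrow> nat" and V :: "(nat \<Rightarrow> nat) \<Rightarrow> complex"
  assumes i: "i < N" and eb: "orthonormal_eigenbasis {..<d i} (reduced1 N d V i) (e i) (lam i)"
    and e: "\<forall>j<N. orthonormal_family {..<d j} {..<d j} (e j)"
  shows "\<forall>a<d i. lam i a = sum (basis_prob N d V e) {x \<in> configs N d. x i = a}"
    and "entropy_of N d V {i} * ln 2 = - (\<Sum>a<d i. xlnx (lam i a))"
proof -
  define K where "K = PiE {i} (\<lambda>i. {..<d i})"
  have K: "finite K" unfolding K_def by (simp add: finite_PiE)
  have Si: "{i} \<subseteq> {..<N}" using i by simp
  have onf: "orthonormal_family K K (prod_basis e {i})"
    unfolding K_def using e i by (intro prod_basis_orthonormal) auto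
  note eig = reduced_singleton_eigenvectors[where e=e and lam=lam, OF eb, folded K_def]
  have marg: "lam i (s i) = sum (basis_prob N d V e) {x \<in> configs N d. x i = s i}" if "s \<in> K" for s
    using eigenvectors_on_cinner[OF eig onf that] reduced_prod_basis_form[OF Si _ e, of s V]
      restrict_eq_PiE_iff[of s "{i}"] that
    unfolding K_def basis_prob_def by simp
  show "\<forall>a<d i. lam i a = sum (basis_prob N d V e) {x \<in> configs N d. x i = a}"
  proof (intro allI impI)
    fix a assume "a < d i"
    then have "(\<lambda>_. undefined)(i := a) \<in> K" unfolding K_def by (auto simp: PiE_def extensional_def)
    from marg[OF this] show "lam i a = sum (basis_prob N d V e) {x \<in> configs N d. x i = a}" by simp
  qed
  have "\<forall>s\<in>K. 0 \<le> lam i (s i)" using marg unfolding basis_prob_def by (simp add: sum_nonneg)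
  from vn_entropy_eq_eigenvalues[OF K reduced_hermitian[OF Si, of d V, folded K_def] K refl onf
      eig this]
  show "entropy_of N d V {i} * ln 2 = - (\<Sum>a<d i. xlnx (lam i a))"
    unfolding entropy_of_def red_index_set_def K_def[symmetric]
    using sum_PiE_singleton[where i=i and B="\<lambda>i. {..<d i}" and f="\<lambda>a. xlnx (lam i a)"]
    by (simp add: K_def)
qed

lemma configs_coord_less: "x \<in> configs N d \<Longrightarrow> j < N \<Longrightarrow> x j < d j"
  unfolding configs_def by auto

lemma finite_configs: "finite (configs N d)"
  unfolding configs_def by (simp add: finite_PiE)

lemma sum_configs_group:
  assumes "finite R"
  shows "(\<Sum>b\<in>R. sum f {x \<in> configs N d. P x \<and> x j = b}) = sum f {x \<in> configs N d. P x \<and> x j \<in> R}"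
proof -
  have "(\<Sum>b\<in>R. sum f {x \<in> {x \<in> configs N d. P x \<and> x j \<in> R}. x j = b}) =
      sum f {x \<in> configs N d. P x \<and> x j \<in> R}"
    using assms finite_configs by (intro sum.group) auto
  moreover have "{x \<in> {x \<in> configs N d. P x \<and> x j \<in> R}. x j = b} = {x \<in> configs N d. P x \<and> x j = b}"
    if "b \<in> R" for b
    using that by auto
  ultimately show ?thesis by simp
qed

lemma sum_configs_group_all:
  assumes "j < N"
  shows "(\<Sum>b<d j. sum f {x \<in> configs N d. P x \<and> x j = b}) = sum f {x \<in> configs N d. P x}"
  unfolding sum_configs_group[OF finite_lessThan] using configs_coord_less[OF _ assms]
  by (metis (no_types, lifting) lessThan_iff)

lemma entropy_of_pair_le_marginal:
  fixes N :: nat and d :: "nat \<Rightarrow> nat" and V :: "(nat \<Rightarrow> nat) \<Rightarrow> complex"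
  assumes ij: "i < N" "j < N" "i \<noteq> j" and e: "\<forall>k<N. orthonormal_family {..<d k} {..<d k} (e k)"
  shows "(\<Sum>a<d i. \<Sum>b<d j. xlnx (sum (basis_prob N d V e) {x \<in> configs N d. x i = a \<and> x j = b}))
    \<le> - (entropy_of N d V {i, j} * ln 2)"
proof -
  define P where "P a b = sum (basis_prob N d V e) {x \<in> configs N d. x i = a \<and> x j = b}" for a b
  have "{x \<in> configs N d. restrict x {i, j} = s} = {x \<in> configs N d. x i = s i \<and> x j = s j}"
    if "s \<in> PiE {i, j} (\<lambda>i. {..<d i})" for s
    using restrict_eq_PiE_iff[OF that] by auto
  then have "(\<Sum>s\<in>PiE {i, j} (\<lambda>i. {..<d i}). xlnx (P (s i) (s j)))
      \<le> - (entropy_of N d V {i, j} * ln 2)"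
    using entropy_of_le_marginal[OF _ e, of "{i, j}" V] ij unfolding P_def by simp
  then show ?thesis
    unfolding sum.reindex_bij_betw[OF bij_betw_PiE_pair[OF ij(3)],
        of "\<lambda>(a, b). xlnx (P a b)", simplified]
    by (simp add: sum.cartesian_product' P_def)
qed

lemma basis_prob_pair_independent:
  fixes N :: nat and d :: "nat \<Rightarrow> nat" and V :: "(nat \<Rightarrow> nat) \<Rightarrow> complex"
  assumes ij: "i < N" "j < N" "i \<noteq> j"
    and norm: "(\<Sum>x\<in>configs N d. (cmod (V x))\<^sup>2) = 1"
    and eb: "\<forall>k<N. orthonormal_eigenbasis {..<d k} (reduced1 N d V k) (e k) (lam k)"
    and MI: "mutual_info N d V i j = 0"
    and ab: "a < d i" "b < d j"
  defines "p \<equiv> basis_prob N d V e"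
  shows "sum p {x \<in> configs N d. x i = a \<and> x j = b} =
    sum p {x \<in> configs N d. x i = a} * sum p {x \<in> configs N d. x j = b}"
proof -
  define P where "P a b = sum p {x \<in> configs N d. x i = a \<and> x j = b}" for a b
  have e: "\<forall>k<N. orthonormal_family {..<d k} {..<d k} (e k)"
    using eb unfolding orthonormal_eigenbasis_iff by blast
  have marg: "lam k c = sum p {x \<in> configs N d. x k = c}" if "k < N" "c < d k" for k c
    using single_party_spectrum(1)[where e=e and lam=lam, OF that(1) eb[rule_format, OF that(1)] e]
      that(2)
    unfolding p_def by blast
  have ent: "entropy_of N d V {k} * ln 2 = - (\<Sum>c<d k. xlnx (lam k c))" if "k < N" for k
    using single_party_spectrum(2)[where e=e and lam=lam, OF that eb[rule_format, OF that] e] .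
  have row: "(\<Sum>b<d j. P a b) = sum p {x \<in> configs N d. x i = a}" for a
    unfolding P_def by (rule sum_configs_group_all[OF ij(2)])
  have col: "(\<Sum>a<d i. P a b) = sum p {x \<in> configs N d. x j = b}" for b
    unfolding P_def conj_commute[of "_ i = _"] by (rule sum_configs_group_all[OF ij(1)])
  have "(\<Sum>a<d i. \<Sum>b<d j. P a b) = sum p (configs N d)"
    unfolding row using sum_configs_group_all[OF ij(1), where f=p and d=d and P="\<lambda>_. True"] by simp
  then have total: "(\<Sum>a<d i. \<Sum>b<d j. P a b) = 1"
    using sum_basis_prob[OF e] norm unfolding p_def by simp
  have "(\<Sum>a<d i. \<Sum>b<d j. xlnx (P a b)) \<le> - (entropy_of N d V {i, j} * ln 2)"
    unfolding P_def p_def by (rule entropy_of_pair_le_marginal[OF ij e])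
  also have "\<dots> = - (entropy_of N d V {i} * ln 2) - entropy_of N d V {j} * ln 2"
  proof -
    have "entropy_of N d V {i, j} = entropy_of N d V {i} + entropy_of N d V {j}"
      using MI unfolding mutual_info_def by simp
    then show ?thesis by (simp add: algebra_simps)
  qed
  also have "\<dots> = (\<Sum>a<d i. xlnx (lam i a)) + (\<Sum>b<d j. xlnx (lam j b))"
    unfolding ent[OF ij(1)] ent[OF ij(2)] by simp
  also have "\<dots> = (\<Sum>a<d i. xlnx (\<Sum>b<d j. P a b)) + (\<Sum>b<d j. xlnx (\<Sum>a<d i. P a b))"
    unfolding row col using marg ij by simp
  finally have "P a b = (\<Sum>b<d j. P a b) * (\<Sum>a<d i. P a b)"
    using ab total unfolding P_def p_def basis_prob_def
    by (intro entropy_additive_imp_independent) (auto intro: sum_nonneg)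
  then show ?thesis using row[of a] col[of b] unfolding P_def by simp
qed

lemma sum_union_bound:
  fixes f :: "'a \<Rightarrow> real"
  assumes A: "finite A" and J: "finite J" and f: "\<forall>x\<in>A. 0 \<le> f x"
  shows "sum f A \<le> sum f {x \<in> A. \<forall>j\<in>J. \<not> P j x} + (\<Sum>j\<in>J. sum f {x \<in> A. P j x})"
proof -
  have "f x \<le> (if \<forall>j\<in>J. \<not> P j x then f x else 0) + (\<Sum>j\<in>J. if P j x then f x else 0)"
    if "x \<in> A" for x
  proof (cases "\<forall>j\<in>J. \<not> P j x")
    case True
    then show ?thesis by simp
  next
    case False
    then obtain j where "j \<in> J" "P j x" by blast
    then have "(if P j x then f x else 0) \<le> (\<Sum>j\<in>J. if P j x then f x else 0)"
      using J f that by (intro member_le_sum) auto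
    then have "f x \<le> (\<Sum>j\<in>J. if P j x then f x else 0)"
      using \<open>P j x\<close> by simp
    then show ?thesis using False by simp
  qed
  then have "sum f A \<le>
      (\<Sum>x\<in>A. (if \<forall>j\<in>J. \<not> P j x then f x else 0) + (\<Sum>j\<in>J. if P j x then f x else 0))"
    by (rule sum_mono)
  also have "\<dots> = sum f {x \<in> A. \<forall>j\<in>J. \<not> P j x} + (\<Sum>j\<in>J. sum f {x \<in> A. P j x})"
    using A by (simp add: sum.distrib sum.inter_filter sum.swap[of _ A])
  finally show ?thesis .
qed

lemma sum_configs_indep_events:
  fixes p :: "(nat \<Rightarrow> nat) \<Rightarrow> real"
  assumes indep: "\<forall>a\<in>R. \<forall>b\<in>R'. sum p {x \<in> configs N d. x i = a \<and> x j = b} =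
      sum p {x \<in> configs N d. x i = a} * sum p {x \<in> configs N d. x j = b}"
    and R: "finite R" "finite R'"
  shows "sum p {x \<in> configs N d. x i \<in> R \<and> x j \<in> R'} =
    sum p {x \<in> configs N d. x i \<in> R} * sum p {x \<in> configs N d. x j \<in> R'}"
proof -
  have "sum p {x \<in> configs N d. x i \<in> R \<and> x j \<in> R'} =
      (\<Sum>a\<in>R. sum p {x \<in> configs N d. x j \<in> R' \<and> x i = a})"
    unfolding sum_configs_group[OF R(1)] by (simp add: conj_commute)
  also have "\<dots> = (\<Sum>a\<in>R. \<Sum>b\<in>R'. sum p {x \<in> configs N d. x i = a \<and> x j = b})"
    unfolding sum_configs_group[OF R(2)] by (simp add: conj_commute)
  also have "\<dots> = (\<Sum>a\<in>R. \<Sum>b\<in>R'. sum p {x \<in> configs N d. x i = a} * sum p {x \<in> configs N d. x j = b})"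
    using indep by (intro sum.cong) auto
  also have "\<dots> =
      (\<Sum>a\<in>R. sum p {x \<in> configs N d. x i = a}) * (\<Sum>b\<in>R'. sum p {x \<in> configs N d. x j = b})"
    by (rule sum_product[symmetric])
  also have "\<dots> = sum p {x \<in> configs N d. x i \<in> R} * sum p {x \<in> configs N d. x j \<in> R'}"
    using sum_configs_group[OF R(1), of p N d "\<lambda>_. True" i]
      sum_configs_group[OF R(2), of p N d "\<lambda>_. True" j]
    by simp
  finally show ?thesis .
qed

lemma sum_configs_nonzero_coord:
  fixes p :: "(nat \<Rightarrow> nat) \<Rightarrow> real"
  assumes "i < N" "sum p (configs N d) = 1"
  shows "sum p {x \<in> configs N d. x i \<in> {1..<d i}} = 1 - sum p {x \<in> configs N d. x i = 0}"
proof -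
  have "{x \<in> configs N d. x i \<in> {1..<d i}} = {x \<in> configs N d. x i \<noteq> 0}"
    using configs_coord_less[OF _ assms(1)] by auto
  moreover have "sum p (configs N d) =
      sum p {x \<in> configs N d. x i = 0} + sum p {x \<in> configs N d. x i \<noteq> 0}"
    using finite_configs
    by (subst sum.union_disjoint[symmetric]) (auto intro: arg_cong[where f = "sum p"])
  ultimately show ?thesis using assms(2) by simp
qed

lemma pairwise_independent_excitation_bound:
  fixes p :: "(nat \<Rightarrow> nat) \<Rightarrow> real"
  assumes N: "0 < N"
    and p: "\<forall>x\<in>configs N d. 0 \<le> p x" and total: "sum p (configs N d) = 1"
    and indep: "\<forall>j\<in>{1..<N}. \<forall>a<d 0. \<forall>b<d j. sum p {x \<in> configs N d. x 0 = a \<and> x j = b} =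
      sum p {x \<in> configs N d. x 0 = a} * sum p {x \<in> configs N d. x j = b}"
  defines "\<epsilon> i \<equiv> 1 - sum p {x \<in> configs N d. x i = 0}"
  shows "\<epsilon> 0 * (1 + \<epsilon> 0 - (\<Sum>i<N. \<epsilon> i)) \<le>
    sum p {x \<in> configs N d. 1 \<le> x 0 \<and> (\<forall>j\<in>{1..<N}. x j = 0)}"
proof -
  define Q where "Q = configs N d"
  have excited: "sum p {x \<in> Q. x i \<in> {1..<d i}} = \<epsilon> i" if "i < N" for i
    using sum_configs_nonzero_coord[OF that total] unfolding Q_def \<epsilon>_def .
  have both: "sum p {x \<in> Q. 1 \<le> x 0 \<and> 1 \<le> x j} = \<epsilon> 0 * \<epsilon> j" if "j \<in> {1..<N}" for j
  proof -
    have "{x \<in> Q. 1 \<le> x 0 \<and> 1 \<le> x j} = {x \<in> Q. x 0 \<in> {1..<d 0} \<and> x j \<in> {1..<d j}}"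
      using configs_coord_less[of _ N d 0] configs_coord_less[of _ N d j] N that
      unfolding Q_def by auto
    then show ?thesis
      using sum_configs_indep_events[of "{1..<d 0}" "{1..<d j}" p N d 0 j] indep that
        excited[OF N] excited[of j] unfolding Q_def by auto
  qed
  have "\<epsilon> 0 \<le> sum p {x \<in> Q. 1 \<le> x 0 \<and> (\<forall>j\<in>{1..<N}. x j = 0)} + (\<Sum>j\<in>{1..<N}. \<epsilon> 0 * \<epsilon> j)"
  proof -
    have "{x \<in> Q. x 0 \<in> {1..<d 0}} = {x \<in> Q. 1 \<le> x 0}"
      using configs_coord_less[OF _ N] unfolding Q_def by auto
    then have "\<epsilon> 0 = sum p {x \<in> Q. 1 \<le> x 0}" using excited[OF N] by simp
    also have "\<dots> \<le> sum p {x \<in> {x \<in> Q. 1 \<le> x 0}. \<forall>j\<in>{1..<N}. \<not> 1 \<le> x j}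
        + (\<Sum>j\<in>{1..<N}. sum p {x \<in> {x \<in> Q. 1 \<le> x 0}. 1 \<le> x j})"
      using p finite_configs unfolding Q_def by (intro sum_union_bound) auto
    also have "{x \<in> {x \<in> Q. 1 \<le> x 0}. \<forall>j\<in>{1..<N}. \<not> 1 \<le> x j} =
        {x \<in> Q. 1 \<le> x 0 \<and> (\<forall>j\<in>{1..<N}. x j = 0)}"
      by auto
    also have "(\<Sum>j\<in>{1..<N}. sum p {x \<in> {x \<in> Q. 1 \<le> x 0}. 1 \<le> x j}) = (\<Sum>j\<in>{1..<N}. \<epsilon> 0 * \<epsilon> j)"
      using both by (intro sum.cong) (simp_all add: Collect_conj_eq Int_assoc)
    finally show ?thesis .
  qed
  moreover have "(\<Sum>j\<in>{1..<N}. \<epsilon> 0 * \<epsilon> j) = \<epsilon> 0 * (\<Sum>j\<in>{1..<N}. \<epsilon> j)"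
    by (rule sum_distrib_left[symmetric])
  moreover have "(\<Sum>i<N. \<epsilon> i) = \<epsilon> 0 + (\<Sum>j\<in>{1..<N}. \<epsilon> j)"
    using N by (simp add: lessThan_atLeast0 sum.atLeast_Suc_lessThan)
  then have "\<epsilon> 0 * (1 + \<epsilon> 0 - (\<Sum>i<N. \<epsilon> i)) = \<epsilon> 0 - \<epsilon> 0 * (\<Sum>j\<in>{1..<N}. \<epsilon> j)"
    by (simp add: algebra_simps)
  ultimately show ?thesis
    unfolding Q_def by linarith
qed

lemma sum_single_excitations:
  assumes N: "0 < N" and d: "\<forall>i<N. 1 \<le> d i"
    and g: "\<And>x y. \<forall>i<N. x i = y i \<Longrightarrow> g x = g y"
  shows "sum g {x \<in> configs N d. 1 \<le> x 0 \<and> (\<forall>j\<in>{1..<N}. x j = 0)} =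
    (\<Sum>a\<in>{1..<d 0}. g (\<lambda>i. if i = 0 then a else 0))"
proof -
  define E where "E = {x \<in> configs N d. 1 \<le> x 0 \<and> (\<forall>j\<in>{1..<N}. x j = 0)}"
  define G where "G a = g (\<lambda>i. if i = 0 then a else 0)" for a
  have "x i = (if i = 0 then x 0 else 0)" if "x \<in> E" "i < N" for x i
    using that unfolding E_def by auto
  then have gG: "g x = G (x 0)" if "x \<in> E" for x
    unfolding G_def using that by (intro g) simp
  have "bij_betw (\<lambda>x. x 0) E {1..<d 0}"
  proof (rule bij_betw_byWitness[where f' = "\<lambda>a. restrict (\<lambda>i. if i = 0 then a else 0) {..<N}"])
    show "\<forall>x\<in>E. restrict (\<lambda>i. if i = 0 then x 0 else 0) {..<N} = x"
      unfolding E_def configs_def by (auto simp: PiE_def extensional_def fun_eq_iff)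
    show "\<forall>a\<in>{1..<d 0}. restrict (\<lambda>i. if i = 0 then a else 0) {..<N} 0 = a"
      using N by simp
    show "(\<lambda>x. x 0) ` E \<subseteq> {1..<d 0}"
      using configs_coord_less[OF _ N] unfolding E_def by auto
    show "(\<lambda>a. restrict (\<lambda>i. if i = 0 then a else 0) {..<N}) ` {1..<d 0} \<subseteq> E"
      using N d unfolding E_def configs_def by (auto simp: PiE_def Suc_le_eq)
  qed
  then have "(\<Sum>x\<in>E. G (x 0)) = sum G {1..<d 0}"
    by (rule sum.reindex_bij_betw)
  then show ?thesis
    using gG unfolding E_def[symmetric] G_def[symmetric] by simp
qed

lemma coeff_in_basis_cong:
  "\<forall>i<N. x i = y i \<Longrightarrow> coeff_in_basis N d V e x = coeff_in_basis N d V e y"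
  unfolding coeff_in_basis_def by simp

theorem lemma2:
  fixes N :: nat and d :: "nat \<Rightarrow> nat" and V :: "(nat \<Rightarrow> nat) \<Rightarrow> complex"
    and e :: "nat \<Rightarrow> nat \<Rightarrow> nat \<Rightarrow> complex" and lam :: "nat \<Rightarrow> nat \<Rightarrow> real"
  assumes "N \<ge> 2"
    and "\<forall>i<N. d i \<ge> 1"
    and "(\<Sum>x\<in>configs N d. (cmod (V x))\<^sup>2) = 1"
    and "\<forall>j. 0 < j \<and> j < N \<longrightarrow> mutual_info N d V 0 j = 0"
    and "\<forall>i<N. orthonormal_eigenbasis {..<d i} (reduced1 N d V i) (e i) (lam i)"
    and "\<forall>i<N. \<forall>k l. k \<le> l \<and> l < d i \<longrightarrow> lam i l \<le> lam i k"
  shows "(\<Sum>x1\<in>{1..<d 0}. (cmod (coeff_in_basis N d V e (\<lambda>i. if i = 0 then x1 else 0)))\<^sup>2)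
           \<ge> (1 - lam 0 0) * (1 + (1 - lam 0 0) - (\<Sum>i<N. 1 - lam i 0))"
proof -
  note d = assms(2) and norm = assms(3) and MI = assms(4) and eb = assms(5)
  define p where "p = basis_prob N d V e"
  have N: "0 < N" using assms(1) by simp
  have e: "\<forall>i<N. orthonormal_family {..<d i} {..<d i} (e i)"
    using eb unfolding orthonormal_eigenbasis_iff by blast
  have lam0: "lam i 0 = sum p {x \<in> configs N d. x i = 0}" if "i < N" for i
  proof -
    have "0 < d i" using d that by (simp add: Suc_le_eq)
    then show ?thesis
      using single_party_spectrum(1)[where e=e and lam=lam, OF that eb[rule_format, OF that] e]
      unfolding p_def by blast
  qed
  have "\<forall>j\<in>{1..<N}. \<forall>a<d 0. \<forall>b<d j. sum p {x \<in> configs N d. x 0 = a \<and> x j = b} =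
      sum p {x \<in> configs N d. x 0 = a} * sum p {x \<in> configs N d. x j = b}"
    using basis_prob_pair_independent[OF N _ _ norm eb] MI unfolding p_def by auto
  from pairwise_independent_excitation_bound[OF N _ _ this]
  have "(1 - lam 0 0) * (1 + (1 - lam 0 0) - (\<Sum>i<N. 1 - lam i 0)) \<le>
      sum p {x \<in> configs N d. 1 \<le> x 0 \<and> (\<forall>j\<in>{1..<N}. x j = 0)}"
    using sum_basis_prob[OF e] norm lam0 N unfolding p_def basis_prob_def by simp
  also have "\<dots> = (\<Sum>x1\<in>{1..<d 0}. (cmod (coeff_in_basis N d V e (\<lambda>i. if i = 0 then x1 else 0)))\<^sup>2)"
    unfolding p_def basis_prob_def using coeff_in_basis_cong
    by (intro sum_single_excitations[OF N d]) metis
  finally show ?thesis .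
qed

end
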